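(* Let $f\in\mathcal A_C$ and $g\in\mathcal{BV}$. Then: (a) $f*g(x)=\int_{-\infty}^\infty f(x-y)g(y)\,dy$ exists for every $x\in\mathbb R$; (b) $f*g=g*f$, i.e. $\int_{-\infty}^\infty f(x-y)g(y)\,dy=\int_{-\infty}^\infty f(y)g(x-y)\,dy$ for all $x\in\mathbb R$; (c) $\|f*g\|_\infty\le \left|\int_{-\infty}^\infty f\right|\inf_{\mathbb R}|g|+\|f\|\,Vg\le \|f\|\,\|g\|_{\mathcal{BV}}$; (d) $f*g\in C^0(\overline{\mathbb R})$ and $\lim_{x\to\pm\infty}f*g(x)=g(\pm\infty)\int_{-\infty}^\infty f$; (f) for all $x,z\in\mathbb R$, $\tau_z(f*g)(x)=(\tau_zf)*g(x)=f*(\tau_zg)(x)$.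
   Context: Notation: $\mathcal D=C_c^\infty(\mathbb R)$ (test functions), $\mathcal D'$ the Schwartz distributions; derivatives of distributions are distributional derivatives. $\overline{\mathbb R}=[-\infty,\infty]$ and $F(\pm\infty)=\lim_{x\to\pm\infty}F(x)$. $C^0(\overline{\mathbb R})$ is the set of continuous $F:\mathbb R\to\mathbb R$ having finite limits at $\pm\infty$; $\|F\|_\infty=\sup_{\mathbb R}|F|$. $\mathcal B_C=\{F\in C^0(\overline{\mathbb R}):F(-\infty)=0\}$. $\mathcal A_C=\{f\in\mathcal D': f=F' \text{ for some } F\in\mathcal B_C\}$; the primitive $F\in\mathcal B_C$ of $f$ is unique, and the continuous primitive integral is $\int_a^bf=F(b)-F(a)$ for $a,b\in\overline{\mathbb R}$. The Alexiewicz norm is $\|f\|=\sup_I|\int_If|$, the supremum over all intervals $I\subset\mathbb R$. A function in $L^1$ is identified with the distribution it defines. $\mathcal{BV}$ is the set of $g:\mathbb R\to\mathbb R$ with finite variation $Vg=\sup\sum_i|g(x_i)-g(y_i)|$ (supremum over finite families of disjoint intervals $(x_i,y_i)$); such $g$ have limits $g(\pm\infty)$, and $\|g\|_{\mathcal{BV}}=|g(-\infty)|+Vg$. For $h\in\mathcal A_C$ with primitive $H$ and $g\in\mathcal{BV}$ the integral of the product is defined by $\int_{-\infty}^\infty hg=H(\infty)g(\infty)-\int_{-\infty}^\infty H\,dg$ (Henstock–Stieltjes integral). For $f\in\mathcal A_C$ with primitive $F$ and $x\in\mathbb R$, $f(x-\cdot)$ denotes the element of $\mathcal A_C$ with primitive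 $y\mapsto F(\infty)-F(x-y)$, and for $g\in\mathcal{BV}$ the convolution is $f*g(x)=\int_{-\infty}^\infty f(x-y)g(y)\,dy$, the product integral of $f(x-\cdot)$ and $g$; $g*f(x)=\int_{-\infty}^\infty f(y)g(x-y)\,dy$ is the product integral of $f$ and $y\mapsto g(x-y)$. Translations: for a function $\phi$, $\tau_z\phi(y)=\phi(y-z)$; for $f\in\mathcal A_C$ with primitive $F$, $\tau_zf$ is the element of $\mathcal A_C$ with primitive $F(\cdot-z)$ (equivalently $\langle\tau_zf,\phi\rangle=\langle f,\tau_{-z}\phi\rangle$). *)

theory Defs
  imports "HOL-Analysis.Analysis"
begin

definition lim_top :: "(real \<Rightarrow> real) \<Rightarrow> real" where
  "lim_top F = Lim at_top F"

definition lim_bot :: "(real \<Rightarrow> real) \<Rightarrow> real" where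
  "lim_bot F = Lim at_bot F"

definition C0bar :: "(real \<Rightarrow> real) \<Rightarrow> bool" where
  "C0bar F \<longleftrightarrow> continuous_on UNIV F \<and> (\<exists>L. (F \<longlongrightarrow> L) at_top) \<and> (\<exists>L. (F \<longlongrightarrow> L) at_bot)"

text \<open>An element f of A_C is represented by its unique primitive F in B_C.\<close>
definition BC :: "(real \<Rightarrow> real) \<Rightarrow> bool" where
  "BC F \<longleftrightarrow> C0bar F \<and> (F \<longlongrightarrow> 0) at_bot"

text \<open>Integral of f over the whole line: F(inf) - F(-inf) = F(inf).\<close>
definition int_R :: "(real \<Rightarrow> real) \<Rightarrow> real" where
  "int_R F = lim_top F - lim_bot F"

text \<open>Alexiewicz norm: sup over intervals of the absolute integral.\<close>
definition alex_norm :: "(real \<Rightarrow> real) \<Rightarrow> real" where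
  "alex_norm F = (SUP p \<in> {p :: real \<times> real. fst p \<le> snd p}. \<bar>F (snd p) - F (fst p)\<bar>)"

definition var_sums :: "(real \<Rightarrow> real) \<Rightarrow> real set" where
  "var_sums g = {(\<Sum>(x,y)\<in>S. \<bar>g x - g y\<bar>) | S. finite S \<and> (\<forall>(x,y)\<in>S. x < y) \<and>
      (\<forall>p\<in>S. \<forall>q\<in>S. p \<noteq> q \<longrightarrow> {fst p<..<snd p} \<inter> {fst q<..<snd q} = {})}"

definition is_BV :: "(real \<Rightarrow> real) \<Rightarrow> bool" where
  "is_BV g \<longleftrightarrow> bdd_above (var_sums g)"

definition Var :: "(real \<Rightarrow> real) \<Rightarrow> real" where
  "Var g = Sup (var_sums g)"

definition BV_norm :: "(real \<Rightarrow> real) \<Rightarrow> real" where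
  "BV_norm g = \<bar>lim_bot g\<bar> + Var g"

definition hs_has_integral :: "(real \<Rightarrow> real) \<Rightarrow> (real \<Rightarrow> real) \<Rightarrow> real \<Rightarrow> real \<Rightarrow> real \<Rightarrow> bool" where
  "hs_has_integral H g a b I \<longleftrightarrow>
     (\<forall>e>0. \<exists>\<gamma>. gauge \<gamma> \<and> (\<forall>p. p tagged_division_of {a..b} \<and> \<gamma> fine p \<longrightarrow>
        \<bar>(\<Sum>(t,K)\<in>p. H t * (g (Sup K) - g (Inf K))) - I\<bar> < e))"

definition hs_int :: "(real \<Rightarrow> real) \<Rightarrow> (real \<Rightarrow> real) \<Rightarrow> real \<Rightarrow> real \<Rightarrow> real" where
  "hs_int H g a b = (THE I. hs_has_integral H g a b I)"

definition hs_integrable_R :: "(real \<Rightarrow> real) \<Rightarrow> (real \<Rightarrow> real) \<Rightarrow> bool" where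
  "hs_integrable_R H g \<longleftrightarrow> (\<forall>a b. a \<le> b \<longrightarrow> (\<exists>I. hs_has_integral H g a b I)) \<and>
     (\<exists>L. ((\<lambda>(a,b). hs_int H g a b) \<longlongrightarrow> L) (at_bot \<times>\<^sub>F at_top))"

definition hs_integral_R :: "(real \<Rightarrow> real) \<Rightarrow> (real \<Rightarrow> real) \<Rightarrow> real" where
  "hs_integral_R H g = Lim (at_bot \<times>\<^sub>F at_top) (\<lambda>(a,b). hs_int H g a b)"

text \<open>int hg = H(inf) g(inf) - int H dg, h given by its primitive H.\<close>
definition prod_int :: "(real \<Rightarrow> real) \<Rightarrow> (real \<Rightarrow> real) \<Rightarrow> real" where
  "prod_int H g = lim_top H * lim_top g - hs_integral_R H g"

text \<open>Primitive of f(x - .) : y |-> F(inf) - F(x - y).\<close>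
definition reflp :: "(real \<Rightarrow> real) \<Rightarrow> real \<Rightarrow> real \<Rightarrow> real" where
  "reflp F x = (\<lambda>y. lim_top F - F (x - y))"

definition conv_fg :: "(real \<Rightarrow> real) \<Rightarrow> (real \<Rightarrow> real) \<Rightarrow> real \<Rightarrow> real" where
  "conv_fg F g x = prod_int (reflp F x) g"

definition conv_gf :: "(real \<Rightarrow> real) \<Rightarrow> (real \<Rightarrow> real) \<Rightarrow> real \<Rightarrow> real" where
  "conv_gf F g x = prod_int F (\<lambda>y. g (x - y))"

text \<open>Translation tau_z phi (y) = phi (y - z); for f in A_C applied to its primitive.\<close>
definition transl :: "real \<Rightarrow> (real \<Rightarrow> real) \<Rightarrow> real \<Rightarrow> real" where
  "transl z \<phi> = (\<lambda>y. \<phi> (y - z))"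

end

theory Submission
  imports Defs
begin

text \<open>Everything rests on one estimate for Henstock--Stieltjes integrals \<open>\<integral> H dg\<close> of bounded continuous
  \<open>H\<close>: if \<open>|H - c1| \<le> M1\<close> left of \<open>y0\<close> and \<open>|H - c2| \<le> M2\<close> right of \<open>y0\<close>, then \<open>\<integral> H dg\<close>
  is within \<open>M1 V(g, ]-\<infinity>,y0]) + M2 V(g, [y0,\<infinity>[)\<close> of the integral of the step function.
  Applied to the primitives \<open>F(\<infinity>) - F(x - \<cdot>)\<close> it gives the sup-norm bound (c), continuity
  and the limits at \<open>\<pm>\<infinity>\<close> (d); reflecting and translating the integration variable gives
  commutativity (b) and the translation rules (f).\<close>

section \<open>Variation of a function over a subset of the line\<close>

definition var_sums_on :: "(real \<Rightarrow> real) \<Rightarrow> real set \<Rightarrow> real set" where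
  "var_sums_on g A = {(\<Sum>(x,y)\<in>S. \<bar>g x - g y\<bar>) | S. finite S \<and> (\<forall>(x,y)\<in>S. x < y \<and> x \<in> A \<and> y \<in> A) \<and>
      (\<forall>p\<in>S. \<forall>q\<in>S. p \<noteq> q \<longrightarrow> {fst p<..<snd p} \<inter> {fst q<..<snd q} = {})}"

lemma var_sums_eq_var_sums_on: "var_sums g = var_sums_on g UNIV"
  unfolding var_sums_def var_sums_on_def by auto

lemma var_sums_on_mono: "A \<subseteq> B \<Longrightarrow> var_sums_on g A \<subseteq> var_sums_on g B"
  unfolding var_sums_on_def by fastforce

lemma zero_in_var_sums_on: "0 \<in> var_sums_on g A"
  unfolding var_sums_on_def by (rule CollectI, rule exI[of _ "{}"]) auto

lemma var_sums_on_le_Var: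
  assumes "is_BV g" "s \<in> var_sums_on g A" shows "s \<le> Var g"
proof -
  have "s \<in> var_sums g"
    using assms(2) var_sums_on_mono[of A UNIV] by (auto simp: var_sums_eq_var_sums_on)
  then show ?thesis using assms(1) unfolding is_BV_def Var_def by (simp add: cSup_upper)
qed

lemma Var_nonneg: "is_BV g \<Longrightarrow> 0 \<le> Var g"
  using var_sums_on_le_Var zero_in_var_sums_on by blast

lemma var_sums_on_pair:
  assumes "s \<in> A" "t \<in> A" shows "\<bar>g s - g t\<bar> \<in> var_sums_on g A"
proof (cases "s = t")
  case True then show ?thesis using zero_in_var_sums_on by simp
next
  case False
  define S where "S = {(min s t, max s t)}"
  have "\<bar>g s - g t\<bar> = (\<Sum>(x,y)\<in>S. \<bar>g x - g y\<bar>)"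
    unfolding S_def by (auto simp: min_def max_def abs_minus_commute)
  moreover have "finite S" "\<forall>(x,y)\<in>S. x < y \<and> x \<in> A \<and> y \<in> A"
    using False assms unfolding S_def by (auto simp: min_def max_def)
  moreover have "\<forall>p\<in>S. \<forall>q\<in>S. p \<noteq> q \<longrightarrow> {fst p<..<snd p} \<inter> {fst q<..<snd q} = {}"
    unfolding S_def by simp
  ultimately show ?thesis unfolding var_sums_on_def by blast
qed

lemma var_sums_on_Un:
  assumes s1: "s1 \<in> var_sums_on g A1" and s2: "s2 \<in> var_sums_on g A2"
    and sep: "\<And>x y. x \<in> A1 \<Longrightarrow> y \<in> A2 \<Longrightarrow> x \<le> y"
  shows "s1 + s2 \<in> var_sums_on g (A1 \<union> A2)"
proof -
  obtain S1 where S1: "s1 = (\<Sum>(x,y)\<in>S1. \<bar>g x - g y\<bar>)" "finite S1" "\<forall>(x,y)\<in>S1. x < y \<and> x \<in> A1 \<and> y \<in> A1"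
    "\<forall>p\<in>S1. \<forall>q\<in>S1. p \<noteq> q \<longrightarrow> {fst p<..<snd p} \<inter> {fst q<..<snd q} = {}"
    using s1 unfolding var_sums_on_def by blast
  obtain S2 where S2: "s2 = (\<Sum>(x,y)\<in>S2. \<bar>g x - g y\<bar>)" "finite S2" "\<forall>(x,y)\<in>S2. x < y \<and> x \<in> A2 \<and> y \<in> A2"
    "\<forall>p\<in>S2. \<forall>q\<in>S2. p \<noteq> q \<longrightarrow> {fst p<..<snd p} \<inter> {fst q<..<snd q} = {}"
    using s2 unfolding var_sums_on_def by blast
  have left_of: "snd p \<le> fst q" if "p \<in> S1" "q \<in> S2" for p q
    using S1(3) S2(3) sep that by (cases p, cases q) fastforce
  have "S1 \<inter> S2 = {}"
    using left_of S1(3) by (fastforce simp: case_prod_unfold)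
  then have "s1 + s2 = (\<Sum>(x,y)\<in>S1 \<union> S2. \<bar>g x - g y\<bar>)"
    using S1(1,2) S2(1,2) by (simp add: sum.union_disjoint)
  moreover have "\<forall>(x,y)\<in>S1 \<union> S2. x < y \<and> x \<in> A1 \<union> A2 \<and> y \<in> A1 \<union> A2"
    using S1(3) S2(3) by blast
  moreover have "{fst p<..<snd p} \<inter> {fst q<..<snd q} = {}"
    if "p \<in> S1 \<union> S2" "q \<in> S1 \<union> S2" "p \<noteq> q" for p q
    using that S1(4) S2(4) left_of[of p q] left_of[of q p] by auto
  ultimately show ?thesis using S1(2) S2(2) unfolding var_sums_on_def by blast
qed

lemma var_sums_on_bounded:
  assumes "s \<in> var_sums_on g A" shows "\<exists>B. s \<in> var_sums_on g (A \<inter> {-B..B})"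
proof -
  obtain S where S: "s = (\<Sum>(x,y)\<in>S. \<bar>g x - g y\<bar>)" "finite S" "\<forall>(x,y)\<in>S. x < y \<and> x \<in> A \<and> y \<in> A"
    "\<forall>p\<in>S. \<forall>q\<in>S. p \<noteq> q \<longrightarrow> {fst p<..<snd p} \<inter> {fst q<..<snd q} = {}"
    using assms unfolding var_sums_on_def by blast
  define B where "B = Max (insert 0 ((\<lambda>(x,y). max \<bar>x\<bar> \<bar>y\<bar>) ` S))"
  have "max \<bar>x\<bar> \<bar>y\<bar> \<le> B" if "(x,y) \<in> S" for x y
    unfolding B_def using S(2) that by (intro Max_ge) force+
  then have "\<forall>(x,y)\<in>S. x < y \<and> x \<in> A \<inter> {-B..B} \<and> y \<in> A \<inter> {-B..B}"
    using S(3) by (fastforce simp: abs_le_iff)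
  then show ?thesis using S unfolding var_sums_on_def by blast
qed

lemma var_sums_on_tails:
  assumes g: "is_BV g" and e: "e > 0"
  obtains B where "\<And>s. s \<in> var_sums_on g {B..} \<Longrightarrow> s \<le> e" "\<And>s. s \<in> var_sums_on g {..-B} \<Longrightarrow> s \<le> e"
proof -
  have "Var g - e < Sup (var_sums g)" using e unfolding Var_def by simp
  moreover have "var_sums g \<noteq> {}" using zero_in_var_sums_on by (auto simp: var_sums_eq_var_sums_on)
  ultimately obtain s0 where "s0 \<in> var_sums g" "Var g - e < s0"
    using less_cSup_iff g unfolding is_BV_def by blast
  then obtain B where s0: "s0 \<in> var_sums_on g {-B..B}" "Var g - e < s0"
    using var_sums_on_bounded[of s0 g UNIV] by (auto simp: var_sums_eq_var_sums_on)
  show ?thesis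
  proof
    fix s assume "s \<in> var_sums_on g {B..}"
    then have "s0 + s \<in> var_sums_on g ({-B..B} \<union> {B..})"
      by (intro var_sums_on_Un[OF s0(1)]) auto
    then show "s \<le> e" using var_sums_on_le_Var[OF g] s0(2) by fastforce
  next
    fix s assume "s \<in> var_sums_on g {..-B}"
    then have "s + s0 \<in> var_sums_on g ({..-B} \<union> {-B..B})"
      by (intro var_sums_on_Un[OF _ s0(1)]) auto
    then show "s \<le> e" using var_sums_on_le_Var[OF g] s0(2) by fastforce
  qed
qed

definition var_left :: "(real \<Rightarrow> real) \<Rightarrow> real \<Rightarrow> real" where
  "var_left g y0 = Sup (var_sums_on g {..y0})"

definition var_right :: "(real \<Rightarrow> real) \<Rightarrow> real \<Rightarrow> real" where
  "var_right g y0 = Sup (var_sums_on g {y0..})"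

lemma bdd_above_var_sums_on: "is_BV g \<Longrightarrow> bdd_above (var_sums_on g A)"
  using var_sums_on_le_Var by (meson bdd_aboveI)

lemma var_left_upper: "is_BV g \<Longrightarrow> s \<in> var_sums_on g {..y0} \<Longrightarrow> s \<le> var_left g y0"
  unfolding var_left_def by (rule cSup_upper) (auto intro: bdd_above_var_sums_on)

lemma var_right_upper: "is_BV g \<Longrightarrow> s \<in> var_sums_on g {y0..} \<Longrightarrow> s \<le> var_right g y0"
  unfolding var_right_def by (rule cSup_upper) (auto intro: bdd_above_var_sums_on)

lemma var_left_nonneg: "is_BV g \<Longrightarrow> 0 \<le> var_left g y0"
  using var_left_upper zero_in_var_sums_on by blast

lemma var_right_nonneg: "is_BV g \<Longrightarrow> 0 \<le> var_right g y0"
  using var_right_upper zero_in_var_sums_on by blast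

lemma var_left_right_le_Var:
  assumes g: "is_BV g" shows "var_left g y0 + var_right g y0 \<le> Var g"
proof -
  have ne: "var_sums_on g A \<noteq> {}" for A using zero_in_var_sums_on by blast
  have "s1 \<le> Var g - var_right g y0" if s1: "s1 \<in> var_sums_on g {..y0}" for s1
  proof -
    have "s2 \<le> Var g - s1" if "s2 \<in> var_sums_on g {y0..}" for s2
      using var_sums_on_Un[OF s1 that] var_sums_on_le_Var[OF g] by fastforce
    then have "var_right g y0 \<le> Var g - s1" unfolding var_right_def by (intro cSup_least[OF ne])
    then show ?thesis by linarith
  qed
  then have "var_left g y0 \<le> Var g - var_right g y0" unfolding var_left_def by (intro cSup_least[OF ne])
  then show ?thesis by linarith
qed

lemma var_left_right_tails:
  assumes g: "is_BV g" and e: "e > 0"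
  obtains B where "\<And>y0. B \<le> y0 \<Longrightarrow> var_right g y0 \<le> e" "\<And>y0. y0 \<le> -B \<Longrightarrow> var_left g y0 \<le> e"
proof -
  obtain B where R: "\<And>s. s \<in> var_sums_on g {B..} \<Longrightarrow> s \<le> e"
    and L: "\<And>s. s \<in> var_sums_on g {..-B} \<Longrightarrow> s \<le> e"
    using var_sums_on_tails[OF g e] by blast
  show ?thesis
  proof
    fix y0 assume "B \<le> y0"
    then have "var_sums_on g {y0..} \<subseteq> var_sums_on g {B..}" by (intro var_sums_on_mono) auto
    then show "var_right g y0 \<le> e"
      unfolding var_right_def by (intro cSup_least) (use zero_in_var_sums_on R in blast)+
  next
    fix y0 assume "y0 \<le> -B"
    then have "var_sums_on g {..y0} \<subseteq> var_sums_on g {..-B}" by (intro var_sums_on_mono) auto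
    then show "var_left g y0 \<le> e"
      unfolding var_left_def by (intro cSup_least) (use zero_in_var_sums_on L in blast)+
  qed
qed

lemma filter_Cauchy_convergent:
  fixes f :: "'a \<Rightarrow> 'b::complete_space"
  assumes F: "F \<noteq> bot"
    and C: "\<And>e. e > 0 \<Longrightarrow> \<exists>P. eventually P F \<and> (\<forall>x y. P x \<and> P y \<longrightarrow> dist (f x) (f y) < e)"
  shows "\<exists>L. (f \<longlongrightarrow> L) F"
proof -
  have "cauchy_filter (filtermap f F)"
    using C by (simp add: cauchy_filter_metric_filtermap)
  moreover have "filtermap f F \<noteq> bot" using F by (simp add: filtermap_bot_iff)
  ultimately obtain L where "filtermap f F \<le> nhds L"
    using cauchy_filter_complete_converges[OF _ complete_UNIV] by auto
  then show ?thesis unfolding filterlim_def by blast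
qed

lemma lim_top_eq: "(f \<longlongrightarrow> l) at_top \<Longrightarrow> lim_top f = l"
  unfolding lim_top_def by (rule tendsto_Lim) simp

lemma lim_bot_eq: "(f \<longlongrightarrow> l) at_bot \<Longrightarrow> lim_bot f = l"
  unfolding lim_bot_def by (rule tendsto_Lim) simp

text \<open>A function of bounded variation has limits at \<open>\<pm>\<infinity>\<close>: its oscillation on a tail is a
  variation sum on that tail, hence small.\<close>

lemma BV_limits:
  assumes g: "is_BV g"
  shows "(g \<longlongrightarrow> lim_top g) at_top" "(g \<longlongrightarrow> lim_bot g) at_bot"
proof -
  have tails: "\<exists>B. \<forall>s t. (B \<le> s \<and> B \<le> t \<longrightarrow> \<bar>g s - g t\<bar> < e) \<and> (s \<le> -B \<and> t \<le> -B \<longrightarrow> \<bar>g s - g t\<bar> < e)"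
    if e_pos: "e > 0" for e
  proof -
    obtain B where R: "\<And>s. s \<in> var_sums_on g {B..} \<Longrightarrow> s \<le> e/2"
      and L: "\<And>s. s \<in> var_sums_on g {..-B} \<Longrightarrow> s \<le> e/2"
      using var_sums_on_tails[OF g half_gt_zero[OF e_pos]] by blast
    have "\<bar>g s - g t\<bar> < e" if "B \<le> s" "B \<le> t" for s t
      using R[OF var_sums_on_pair[of s "{B..}" t g]] that e_pos by auto
    moreover have "\<bar>g s - g t\<bar> < e" if "s \<le> -B" "t \<le> -B" for s t
      using L[OF var_sums_on_pair[of s "{..-B}" t g]] that e_pos by auto
    ultimately show ?thesis by blast
  qed
  have "\<exists>L. (g \<longlongrightarrow> L) at_top"
  proof (rule filter_Cauchy_convergent)
    fix e :: real assume "e > 0"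
    then obtain B where "\<forall>s t. B \<le> s \<and> B \<le> t \<longrightarrow> \<bar>g s - g t\<bar> < e" using tails by blast
    then show "\<exists>P. eventually P at_top \<and> (\<forall>x y. P x \<and> P y \<longrightarrow> dist (g x) (g y) < e)"
      by (intro exI[of _ "\<lambda>s. B \<le> s"]) (auto simp: dist_real_def)
  qed simp
  then show "(g \<longlongrightarrow> lim_top g) at_top" using lim_top_eq by blast
  have "\<exists>L. (g \<longlongrightarrow> L) at_bot"
  proof (rule filter_Cauchy_convergent)
    fix e :: real assume "e > 0"
    then obtain B where "\<forall>s t. s \<le> -B \<and> t \<le> -B \<longrightarrow> \<bar>g s - g t\<bar> < e" using tails by blast
    then show "\<exists>P. eventually P at_bot \<and> (\<forall>x y. P x \<and> P y \<longrightarrow> dist (g x) (g y) < e)"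
      by (intro exI[of _ "\<lambda>s. s \<le> -B"]) (auto simp: dist_real_def)
  qed simp
  then show "(g \<longlongrightarrow> lim_bot g) at_bot" using lim_bot_eq by blast
qed

lemma filterlim_real_affine:
  "filterlim (\<lambda>y::real. y + c) at_top at_top" "filterlim (\<lambda>y::real. y + c) at_bot at_bot"
  "filterlim (\<lambda>y::real. c - y) at_bot at_top" "filterlim (\<lambda>y::real. c - y) at_top at_bot"
  unfolding filterlim_at_top filterlim_at_bot eventually_at_top_linorder eventually_at_bot_linorder
  by (metis add_le_cancel_right diff_add_cancel, metis add_le_cancel_right diff_add_cancel,
      metis diff_le_eq le_diff_eq add.commute, metis diff_le_eq le_diff_eq add.commute)

section \<open>Riemann--Stieltjes sums\<close>

definition increment :: "(real \<Rightarrow> real) \<Rightarrow> real set \<Rightarrow> real" where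
  "increment g K = (if K = {} then 0 else g (Sup K) - g (Inf K))"

definition rs_sum :: "(real \<Rightarrow> real) \<Rightarrow> (real \<Rightarrow> real) \<Rightarrow> (real \<times> real set) set \<Rightarrow> real" where
  "rs_sum H g p = (\<Sum>(t,K)\<in>p. H t * (g (Sup K) - g (Inf K)))"

lemma increment_atLeastAtMost: "increment g {u..v} = (if u \<le> v then g v - g u else 0)"
  unfolding increment_def by auto

lemma increment_degenerate: "\<not> u < v \<Longrightarrow> increment g {u..v} = 0"
  unfolding increment_def by (cases "u = v") auto

lemma tagged_division_interval:
  fixes S :: "real set"
  assumes p: "p tagged_division_of S" and tK: "(t,K) \<in> p" shows "\<exists>u v. K = {u..v} \<and> u \<le> v"
proof -
  obtain u v where K: "K = cbox u v" using tagged_division_ofD(4)[OF p tK] by blast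
  moreover have "t \<in> K" using tagged_division_ofD(2)[OF p tK] .
  ultimately show ?thesis by auto
qed

lemma rs_sum_eq_increments:
  "p tagged_division_of (S::real set) \<Longrightarrow> rs_sum H g p = (\<Sum>(t,K)\<in>p. H t * increment g K)"
  unfolding rs_sum_def increment_def by (intro sum.cong) auto

lemma rs_sum_add: "rs_sum (\<lambda>y. H1 y + H2 y) g p = rs_sum H1 g p + rs_sum H2 g p"
  unfolding rs_sum_def by (simp add: sum.distrib case_prod_unfold distrib_right)

lemma rs_sum_cmult: "rs_sum (\<lambda>y. c * H y) g p = c * rs_sum H g p"
  unfolding rs_sum_def by (simp add: sum_distrib_left case_prod_unfold mult.assoc)

lemma rs_sum_const:
  assumes "a \<le> b" "p tagged_division_of {a..b}" shows "rs_sum (\<lambda>y. c) g p = c * (g b - g a)"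
  using additive_tagged_division_1[OF assms, of g]
  unfolding rs_sum_def by (simp add: sum_distrib_left[symmetric] case_prod_unfold)

lemma indexed_sum_in_var_sums_on:
  assumes Y: "finite Y" and uv: "\<And>x. x \<in> Y \<Longrightarrow> u x < v x \<and> u x \<in> A \<and> v x \<in> A"
    and dis: "\<And>x y. x \<in> Y \<Longrightarrow> y \<in> Y \<Longrightarrow> x \<noteq> y \<Longrightarrow> {u x<..<v x} \<inter> {u y<..<v y} = {}"
  shows "(\<Sum>x\<in>Y. \<bar>g (u x) - g (v x)\<bar>) \<in> var_sums_on g A"
proof -
  define e where "e x = (u x, v x)" for x
  have inj: "inj_on e Y"
  proof
    fix x y assume xy: "x \<in> Y" "y \<in> Y" "e x = e y"
    show "x = y"
    proof (rule ccontr)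
      assume "x \<noteq> y"
      then have "{u x<..<v x} = {}" using dis[OF xy(1,2)] xy(3) unfolding e_def by simp
      then show False using uv[OF xy(1)] by simp
    qed
  qed
  then have "(\<Sum>x\<in>Y. \<bar>g (u x) - g (v x)\<bar>) = (\<Sum>(s,t)\<in>e ` Y. \<bar>g s - g t\<bar>)"
    using sum.reindex[OF inj, of "\<lambda>(s,t). \<bar>g s - g t\<bar>"] by (simp add: e_def)
  moreover have "finite (e ` Y)" "\<forall>(s,t)\<in>e ` Y. s < t \<and> s \<in> A \<and> t \<in> A"
    using Y uv unfolding e_def by auto
  moreover have "\<forall>p\<in>e ` Y. \<forall>q\<in>e ` Y. p \<noteq> q \<longrightarrow> {fst p<..<snd p} \<inter> {fst q<..<snd q} = {}"
    using dis unfolding e_def by fastforce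
  ultimately show ?thesis unfolding var_sums_on_def by blast
qed

text \<open>The absolute increments over finitely many non-overlapping closed intervals contained
  in \<open>A\<close> form a variation sum on \<open>A\<close>: degenerate intervals contribute nothing, and the others
  are encoded by their end points.\<close>

lemma increment_sum_in_var_sums_on:
  fixes I :: "'i \<Rightarrow> real set"
  assumes X: "finite X" and iv: "\<And>x. x \<in> X \<Longrightarrow> \<exists>u v. I x = {u..v}"
    and sub: "\<And>x. x \<in> X \<Longrightarrow> I x \<subseteq> A"
    and dis: "\<And>x y. x \<in> X \<Longrightarrow> y \<in> X \<Longrightarrow> x \<noteq> y \<Longrightarrow> interior (I x) \<inter> interior (I y) = {}"
  shows "(\<Sum>x\<in>X. \<bar>increment g (I x)\<bar>) \<in> var_sums_on g A"
proof -
  define Y where "Y = {x\<in>X. Inf (I x) < Sup (I x) \<and> I x \<noteq> {}}"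
  have ivY: "I x = {Inf (I x)..Sup (I x)} \<and> Inf (I x) < Sup (I x)" if x: "x \<in> Y" for x
  proof -
    obtain u v where uv: "I x = {u..v}" using iv x unfolding Y_def by blast
    then have "u \<le> v" using x unfolding Y_def by auto
    then show ?thesis using x uv unfolding Y_def by auto
  qed
  have "increment g (I x) = 0" if x: "x \<in> X - Y" for x
  proof -
    obtain u v where uv: "I x = {u..v}" using iv x by blast
    have "\<not> u < v"
    proof
      assume "u < v"
      then have "x \<in> Y" using x uv unfolding Y_def by auto
      then show False using x by blast
    qed
    then show ?thesis by (simp add: uv increment_degenerate)
  qed
  then have "(\<Sum>x\<in>X. \<bar>increment g (I x)\<bar>) = (\<Sum>x\<in>Y. \<bar>increment g (I x)\<bar>)"
    using X by (intro sum.mono_neutral_right) (auto simp: Y_def)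
  also have "\<dots> = (\<Sum>x\<in>Y. \<bar>g (Inf (I x)) - g (Sup (I x))\<bar>)"
    by (intro sum.cong) (auto simp: increment_def abs_minus_commute Y_def)
  also have "\<dots> \<in> var_sums_on g A"
  proof (rule indexed_sum_in_var_sums_on)
    show "finite Y" using X by (simp add: Y_def)
    fix x assume x: "x \<in> Y"
    then show "Inf (I x) < Sup (I x) \<and> Inf (I x) \<in> A \<and> Sup (I x) \<in> A"
      using ivY[OF x] sub[of x] unfolding Y_def by (metis (no_types, lifting) atLeastAtMost_iff
          less_imp_le mem_Collect_eq order_refl subsetD)
  next
    fix x y assume "x \<in> Y" "y \<in> Y" "x \<noteq> y"
    then show "{Inf (I x)<..<Sup (I x)} \<inter> {Inf (I y)<..<Sup (I y)} = {}"
      using dis[of x y] ivY[of x] ivY[of y] unfolding Y_def by (metis (no_types, lifting)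
          interior_atLeastAtMost_real mem_Collect_eq)
  qed
  finally show ?thesis .
qed

lemma increment_operative: "operative_real (+) (0::real) (increment g)"
proof
  show "increment g {a..b} = 0" if "b \<le> a" for a b
    using that by (auto simp: increment_atLeastAtMost)
  show "increment g {a..c} + increment g {c..b} = increment g {a..b}" if "a < c" "c < b" for a b c
    using that by (auto simp: increment_atLeastAtMost)
qed

lemma increment_division:
  assumes "d division_of {a..b}"
  shows "sum (increment g) d = increment g {a..b}"
proof -
  interpret operative_real "(+)" "0::real" "increment g"
    by (rule increment_operative)
  show ?thesis using division[of d a b] assms unfolding sum_def by simp
qed

lemma increment_inter_null:
  assumes "interior ({x..y} \<inter> {x'..y'}) = {}"
  shows "increment g ({x..y} \<inter> {x'..y'}) = 0"
proof -
  have "{x..y} \<inter> {x'..y'} = {max x x'..min y y'}" by auto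
  moreover have "\<not> max x x' < min y y'"
    using assms calculation interior_atLeastAtMost_real[of "max x x'" "min y y'"] by auto
  ultimately show ?thesis using increment_degenerate by metis
qed

lemma increment_split:
  assumes K: "K = {u..v}" "K \<subseteq> {a..b}" and q: "q tagged_division_of {a..b}"
  shows "increment g K = (\<Sum>(s,L)\<in>q. increment g (K \<inter> L))"
proof -
  have d: "snd ` q division_of {a..b}" using division_of_tagged_division[OF q] .
  have D: "{K \<inter> k | k. k \<in> snd ` q \<and> K \<inter> k \<noteq> {}} division_of {u..v}"
    using division_inter_1[of "snd ` q" "{a..b}" u v] d K by simp
  have ivq: "\<exists>x y. L = {x..y}" if "L \<in> snd ` q" for L
    using d that by (metis box_real(2) division_ofD(4))
  have "(\<Sum>(s,L)\<in>q. increment g (K \<inter> L)) = (\<Sum>L\<in>snd ` q. increment g (K \<inter> L))"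
  proof (rule sum.over_tagged_division_lemma[OF q, of "\<lambda>L. increment g (K \<inter> L)"])
    fix x y :: real assume "box x y = {}"
    then show "increment g (K \<inter> cbox x y) = 0" using K increment_inter_null[of u v x y g] by simp
  qed
  also have "\<dots> = sum (increment g) ((\<lambda>L. K \<inter> L) ` snd ` q)"
  proof (rule sum.reindex_nontrivial[symmetric, unfolded o_def])
    show "finite (snd ` q)" using q by auto
    fix L L' assume LL: "L \<in> snd ` q" "L' \<in> snd ` q" "L \<noteq> L'" "K \<inter> L = K \<inter> L'"
    have "interior L \<inter> interior L' = {}" using d LL division_ofD(5) by blast
    moreover have "interior (K \<inter> L) \<subseteq> interior L" "interior (K \<inter> L) \<subseteq> interior L'"
      using LL(4) by (metis Int_lower2 interior_mono)+
    ultimately have "interior (K \<inter> L) = {}" by blast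
    moreover obtain x y where "L = {x..y}" using ivq[OF LL(1)] by blast
    ultimately show "increment g (K \<inter> L) = 0" using K increment_inter_null[of u v x y g] by simp
  qed
  also have "\<dots> = sum (increment g) {K \<inter> k | k. k \<in> snd ` q \<and> K \<inter> k \<noteq> {}}"
    by (rule sum.mono_neutral_right) (use q in \<open>auto simp: increment_def\<close>)
  also have "\<dots> = increment g K" using increment_division[OF D] K by simp
  finally show ?thesis by simp
qed

lemma rs_sum_common_refinement:
  assumes p: "p tagged_division_of {a..b}" and q: "q tagged_division_of {a..b}"
  shows "rs_sum H g p = (\<Sum>(t,K)\<in>p. \<Sum>(s,L)\<in>q. H t * increment g (K \<inter> L))"
  unfolding rs_sum_eq_increments[OF p]
proof (rule sum.cong[OF refl], clarify)
  fix t K assume tK: "(t,K) \<in> p"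
  obtain u v where "K = {u..v}" using tagged_division_interval[OF p tK] by blast
  moreover have "K \<subseteq> {a..b}" using p tK by blast
  ultimately show "H t * increment g K = (\<Sum>(s,L)\<in>q. H t * increment g (K \<inter> L))"
    using increment_split[OF _ _ q] by (simp add: sum_distrib_left case_prod_unfold)
qed

lemma common_refinement_var_sum:
  assumes p: "p tagged_division_of {a..b}" and q: "q tagged_division_of {a..b}"
  shows "(\<Sum>(x,y)\<in>p \<times> q. \<bar>increment g (snd x \<inter> snd y)\<bar>) \<in> var_sums_on g {a..b}"
proof -
  let ?I = "\<lambda>(x,y). snd x \<inter> snd y"
  have "(\<Sum>z\<in>p \<times> q. \<bar>increment g (?I z)\<bar>) \<in> var_sums_on g {a..b}"
  proof (rule increment_sum_in_var_sums_on)
    show "finite (p \<times> q)" using p q by auto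
    fix z assume z: "z \<in> p \<times> q"
    then obtain t K s L where zz: "z = ((t,K),(s,L))" "(t,K) \<in> p" "(s,L) \<in> q" by auto
    obtain u v u' v' where "K = {u..v}" "L = {u'..v'}"
      using tagged_division_interval[OF p zz(2)] tagged_division_interval[OF q zz(3)] by blast
    then show "\<exists>x y. ?I z = {x..y}" unfolding zz by (simp add: Int_atLeastAtMost) blast
    show "?I z \<subseteq> {a..b}" using tagged_division_ofD(3)[OF p zz(2)] unfolding zz by auto
  next
    fix z w assume zw: "z \<in> p \<times> q" "w \<in> p \<times> q" "z \<noteq> w"
    obtain t K s L t' K' s' L' where zz: "z = ((t,K),(s,L))" "w = ((t',K'),(s',L'))"
      using prod.collapse by metis
    have "interior K \<inter> interior K' = {} \<or> interior L \<inter> interior L' = {}"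
      using zw zz tagged_division_ofD(5)[OF p, of t K t' K'] tagged_division_ofD(5)[OF q, of s L s' L']
      by auto
    then show "interior (?I z) \<inter> interior (?I w) = {}" unfolding zz interior_Int by auto
  qed
  then show ?thesis by (simp add: case_prod_unfold)
qed

text \<open>Both sums are compared on the common refinement, whose increments form a variation sum.\<close>

lemma rs_sum_fine_divisions_close:
  assumes g: "is_BV g" and p: "p tagged_division_of {a..b}" and q: "q tagged_division_of {a..b}"
    and fp: "(\<lambda>x. ball x d) fine p" and fq: "(\<lambda>x. ball x d) fine q"
    and H: "\<And>s t. s \<in> {a..b} \<Longrightarrow> t \<in> {a..b} \<Longrightarrow> \<bar>s - t\<bar> < 2 * d \<Longrightarrow> \<bar>H s - H t\<bar> \<le> e"
    and e: "0 \<le> e"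
  shows "\<bar>rs_sum H g p - rs_sum H g q\<bar> \<le> e * Var g"
proof -
  let ?I = "\<lambda>(x,y). snd x \<inter> snd y"
  have "rs_sum H g p = (\<Sum>(x,y)\<in>p \<times> q. H (fst x) * increment g (?I (x,y)))"
    unfolding rs_sum_common_refinement[OF p q] by (simp add: sum.cartesian_product case_prod_unfold)
  moreover have "rs_sum H g q = (\<Sum>(t,K)\<in>p. \<Sum>(s,L)\<in>q. H s * increment g (K \<inter> L))"
    unfolding rs_sum_common_refinement[OF q p] case_prod_unfold
    by (subst sum.swap) (simp add: Int_commute)
  then have "rs_sum H g q = (\<Sum>(x,y)\<in>p \<times> q. H (fst y) * increment g (?I (x,y)))"
    by (simp add: sum.cartesian_product case_prod_unfold)
  ultimately have "\<bar>rs_sum H g p - rs_sum H g q\<bar>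
      = \<bar>\<Sum>(x,y)\<in>p \<times> q. (H (fst x) - H (fst y)) * increment g (?I (x,y))\<bar>"
    by (simp add: sum_subtractf[symmetric] case_prod_unfold left_diff_distrib)
  also have "\<dots> \<le> (\<Sum>z\<in>p \<times> q. e * \<bar>increment g (?I z)\<bar>)"
  proof (rule order_trans[OF sum_abs sum_mono])
    fix z assume "z \<in> p \<times> q"
    then obtain t K s L where zz: "z = ((t,K),(s,L))" and tK: "(t,K) \<in> p" and sL: "(s,L) \<in> q" by auto
    have "\<bar>(H t - H s) * increment g (K \<inter> L)\<bar> \<le> e * \<bar>increment g (K \<inter> L)\<bar>"
    proof (cases "K \<inter> L = {}")
      case True then show ?thesis by (simp add: increment_def)
    next
      case False
      text \<open>Overlapping intervals of two \<open>d\<close>-fine divisions have tags at distance \<open>< 2d\<close>.\<close>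
      then obtain m where "m \<in> K" "m \<in> L" by blast
      moreover have "K \<subseteq> ball t d" "L \<subseteq> ball s d" using fineD[OF fp tK] fineD[OF fq sL] .
      ultimately have "dist t m < d" "dist s m < d" by auto
      then have "\<bar>t - s\<bar> < 2 * d" by (simp add: dist_real_def)
      moreover have "t \<in> {a..b}" "s \<in> {a..b}"
        using tag_in_interval[OF p tK] tag_in_interval[OF q sL] by auto
      ultimately show ?thesis using H by (simp add: abs_mult mult_right_mono)
    qed
    then show "\<bar>case z of (x,y) \<Rightarrow> (H (fst x) - H (fst y)) * increment g (?I (x,y))\<bar>
        \<le> e * \<bar>increment g (?I z)\<bar>" by (simp add: zz)
  qed
  also have "\<dots> = e * (\<Sum>z\<in>p \<times> q. \<bar>increment g (?I z)\<bar>)"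
    by (simp add: sum_distrib_left)
  also have "\<dots> \<le> e * Var g"
    using common_refinement_var_sum[OF p q, of g] var_sums_on_le_Var[OF g] e
    by (intro mult_left_mono) (auto simp: case_prod_unfold)
  finally show ?thesis .
qed

lemma rs_sum_bound:
  assumes ab: "a \<le> b" and p: "p tagged_division_of {a..b}" and M: "\<And>y. y \<in> {a..b} \<Longrightarrow> \<bar>H y\<bar> \<le> M"
    and W: "\<And>s. s \<in> var_sums_on g {a..b} \<Longrightarrow> s \<le> W"
  shows "\<bar>rs_sum H g p\<bar> \<le> M * W"
proof -
  have in_var: "(\<Sum>z\<in>p. \<bar>increment g (snd z)\<bar>) \<in> var_sums_on g {a..b}"
  proof (rule increment_sum_in_var_sums_on)
    show "finite p" using p by auto
    fix z assume "z \<in> p"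
    then show "\<exists>u v. snd z = {u..v}" "snd z \<subseteq> {a..b}"
      using tagged_division_interval[OF p, of "fst z" "snd z"] tagged_division_ofD(3)[OF p, of "fst z" "snd z"]
      by auto
  next
    fix z w assume "z \<in> p" "w \<in> p" "z \<noteq> w"
    then show "interior (snd z) \<inter> interior (snd w) = {}"
      using tagged_division_ofD(5)[OF p, of "fst z" "snd z" "fst w" "snd w"] by simp
  qed
  have "\<bar>rs_sum H g p\<bar> \<le> (\<Sum>z\<in>p. \<bar>H (fst z)\<bar> * \<bar>increment g (snd z)\<bar>)"
    unfolding rs_sum_eq_increments[OF p] case_prod_unfold
    by (rule order_trans[OF sum_abs]) (simp add: abs_mult)
  also have "\<dots> \<le> (\<Sum>z\<in>p. M * \<bar>increment g (snd z)\<bar>)"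
    using M tag_in_interval[OF p] by (intro sum_mono mult_right_mono) auto
  also have "\<dots> = M * (\<Sum>z\<in>p. \<bar>increment g (snd z)\<bar>)" by (simp add: sum_distrib_left)
  also have "\<dots> \<le> M * W" using W[OF in_var] M[of a] ab by (intro mult_left_mono) auto
  finally show ?thesis .
qed

section \<open>The Riemann--Stieltjes integral over a compact interval\<close>

text \<open>The limit of Riemann--Stieltjes
  sums along this filter is the Riemann--Stieltjes integral; as constant gauges are gauges, it is
  in particular the Henstock--Stieltjes integral \<open>hs_int\<close>.\<close>

definition fine_divisions :: "real \<Rightarrow> real \<Rightarrow> (real \<times> real set) set filter" where
  "fine_divisions a b = (INF d\<in>{0<..}. principal {p. p tagged_division_of {a..b} \<and> (\<lambda>x. ball x d) fine p})"

lemma fine_mono: "d1 \<le> d2 \<Longrightarrow> (\<lambda>x. ball x d1) fine p \<Longrightarrow> (\<lambda>x. ball x d2) fine p"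
  unfolding fine_def by fastforce

lemma eventually_fine_divisions:
  "eventually P (fine_divisions a b) \<longleftrightarrow>
     (\<exists>d>0. \<forall>p. p tagged_division_of {a..b} \<longrightarrow> (\<lambda>x. ball x d) fine p \<longrightarrow> P p)"
proof -
  have "\<exists>d\<in>{0<..}. principal {p. p tagged_division_of {a..b} \<and> (\<lambda>x. ball x d) fine p}
      \<le> inf (principal {p. p tagged_division_of {a..b} \<and> (\<lambda>x. ball x d1) fine p})
            (principal {p. p tagged_division_of {a..b} \<and> (\<lambda>x. ball x d2) fine p})"
    if "d1 \<in> {0<..}" "d2 \<in> {0<..}" for d1 d2 :: real
    using that fine_mono[of "min d1 d2" d1] fine_mono[of "min d1 d2" d2]
    by (intro bexI[of _ "min d1 d2"]) auto
  then show ?thesis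
    unfolding fine_divisions_def by (subst eventually_INF_base) (auto simp: eventually_principal)
qed

lemma fine_divisions_ne_bot: "fine_divisions a b \<noteq> bot"
proof
  assume "fine_divisions a b = bot"
  then obtain d :: real where "d > 0" "\<And>p. p tagged_division_of {a..b} \<Longrightarrow> (\<lambda>x. ball x d) fine p \<Longrightarrow> False"
    unfolding trivial_limit_def eventually_fine_divisions by blast
  then show False using fine_division_exists_real[OF gauge_ball[of d]] by metis
qed

lemma rs_integral_hs_has_integral:
  assumes "(rs_sum H g \<longlongrightarrow> I) (fine_divisions a b)" shows "hs_has_integral H g a b I"
  unfolding hs_has_integral_def
proof (intro allI impI)
  fix e :: real assume "e > 0"
  with assms obtain d where "d > 0"
    and d: "\<And>p. p tagged_division_of {a..b} \<Longrightarrow> (\<lambda>x. ball x d) fine p \<Longrightarrow> \<bar>rs_sum H g p - I\<bar> < e"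
    by (auto dest!: tendstoD simp: eventually_fine_divisions dist_real_def)
  then show "\<exists>\<gamma>. gauge \<gamma> \<and> (\<forall>p. p tagged_division_of {a..b} \<and> \<gamma> fine p \<longrightarrow>
        \<bar>(\<Sum>(t,K)\<in>p. H t * (g (Sup K) - g (Inf K))) - I\<bar> < e)"
    by (intro exI[of _ "\<lambda>x. ball x d"]) (auto simp: rs_sum_def)
qed

text \<open>The Henstock--Stieltjes integral is unique: two gauges have a common fine division.\<close>

lemma hs_has_integral_unique:
  assumes "hs_has_integral H g a b I" "hs_has_integral H g a b J" shows "I = J"
proof (rule ccontr)
  assume "I \<noteq> J"
  define e where "e = \<bar>I - J\<bar> / 2"
  have e: "e > 0" using \<open>I \<noteq> J\<close> unfolding e_def by simp
  obtain \<gamma>1 where g1: "gauge \<gamma>1" "\<And>p. p tagged_division_of {a..b} \<and> \<gamma>1 fine p \<Longrightarrow> \<bar>rs_sum H g p - I\<bar> < e"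
    using assms(1) e unfolding hs_has_integral_def rs_sum_def by meson
  obtain \<gamma>2 where g2: "gauge \<gamma>2" "\<And>p. p tagged_division_of {a..b} \<and> \<gamma>2 fine p \<Longrightarrow> \<bar>rs_sum H g p - J\<bar> < e"
    using assms(2) e unfolding hs_has_integral_def rs_sum_def by meson
  obtain p where p: "p tagged_division_of {a..b}" "(\<lambda>x. \<gamma>1 x \<inter> \<gamma>2 x) fine p"
    using fine_division_exists_real[OF gauge_Int[OF g1(1) g2(1)]] by blast
  then have "\<bar>rs_sum H g p - I\<bar> < e" "\<bar>rs_sum H g p - J\<bar> < e"
    using g1(2) g2(2) fine_Int by blast+
  then show False unfolding e_def by (auto simp: abs_if split: if_splits)
qed

lemma hs_int_eqI: "(rs_sum H g \<longlongrightarrow> I) (fine_divisions a b) \<Longrightarrow> hs_int H g a b = I"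
  unfolding hs_int_def by (rule the_equality) (auto intro: rs_integral_hs_has_integral hs_has_integral_unique)

text \<open>Existence for continuous integrands: by uniform continuity and the basic estimate the
  Riemann--Stieltjes sums are Cauchy along \<open>fine_divisions a b\<close>.\<close>

lemma rs_integral_exists:
  assumes g: "is_BV g" and H: "continuous_on {a..b} H"
  shows "\<exists>I. (rs_sum H g \<longlongrightarrow> I) (fine_divisions a b)"
proof (rule filter_Cauchy_convergent[OF fine_divisions_ne_bot])
  fix e :: real assume "e > 0"
  define \<epsilon> where "\<epsilon> = e / (Var g + 1)"
  have V0: "0 \<le> Var g" using Var_nonneg[OF g] .
  have \<epsilon>: "\<epsilon> > 0" "\<epsilon> * Var g < e"
    using \<open>e > 0\<close> V0 unfolding \<epsilon>_def by (auto simp: field_simps)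
  have "uniformly_continuous_on {a..b} H" by (rule compact_uniformly_continuous[OF H compact_Icc])
  then obtain \<delta> where "\<delta> > 0" and \<delta>: "\<And>s t. s \<in> {a..b} \<Longrightarrow> t \<in> {a..b} \<Longrightarrow> dist s t < \<delta> \<Longrightarrow> dist (H s) (H t) < \<epsilon>"
    using \<epsilon>(1) unfolding uniformly_continuous_on_def by metis
  have "\<bar>rs_sum H g p - rs_sum H g q\<bar> < e"
    if "p tagged_division_of {a..b}" "(\<lambda>x. ball x (\<delta>/2)) fine p"
      "q tagged_division_of {a..b}" "(\<lambda>x. ball x (\<delta>/2)) fine q" for p q
  proof -
    have "\<bar>rs_sum H g p - rs_sum H g q\<bar> \<le> \<epsilon> * Var g"
      using \<delta> \<epsilon>(1) by (intro rs_sum_fine_divisions_close[OF g that(1,3,2,4)]) (auto simp: dist_real_def less_imp_le)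
    then show ?thesis using \<epsilon>(2) by linarith
  qed
  then show "\<exists>P. eventually P (fine_divisions a b) \<and> (\<forall>p q. P p \<and> P q \<longrightarrow> dist (rs_sum H g p) (rs_sum H g q) < e)"
    using \<open>\<delta> > 0\<close>
    by (intro exI[of _ "\<lambda>p. p tagged_division_of {a..b} \<and> (\<lambda>x. ball x (\<delta>/2)) fine p"])
       (auto simp: eventually_fine_divisions dist_real_def intro!: exI[of _ "\<delta>/2"])
qed

lemma rs_integral_hs_int:
  assumes "is_BV g" "continuous_on {a..b} H"
  shows "(rs_sum H g \<longlongrightarrow> hs_int H g a b) (fine_divisions a b)"
  using rs_integral_exists[OF assms] hs_int_eqI by metis

lemma hs_int_diff:
  assumes g: "is_BV g" and H1: "continuous_on {a..b} H1" and H2: "continuous_on {a..b} H2"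
  shows "hs_int (\<lambda>y. H1 y - H2 y) g a b = hs_int H1 g a b - hs_int H2 g a b"
proof (rule hs_int_eqI)
  have "rs_sum (\<lambda>y. H1 y - H2 y) g = (\<lambda>p. rs_sum H1 g p - rs_sum H2 g p)"
    using rs_sum_add[of H1 "\<lambda>y. - H2 y"] rs_sum_cmult[of "-1" H2] by (simp add: fun_eq_iff)
  then show "(rs_sum (\<lambda>y. H1 y - H2 y) g \<longlongrightarrow> hs_int H1 g a b - hs_int H2 g a b) (fine_divisions a b)"
    by (simp add: tendsto_diff rs_integral_hs_int[OF g H1] rs_integral_hs_int[OF g H2])
qed

lemma hs_int_const:
  assumes "a \<le> b" shows "hs_int (\<lambda>y. c) g a b = c * (g b - g a)"
proof (rule hs_int_eqI)
  have "eventually (\<lambda>p. rs_sum (\<lambda>y. c) g p = c * (g b - g a)) (fine_divisions a b)"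
    unfolding eventually_fine_divisions using rs_sum_const[OF assms] by (auto intro!: exI[of _ 1])
  then show "(rs_sum (\<lambda>y. c) g \<longlongrightarrow> c * (g b - g a)) (fine_divisions a b)"
    by (rule tendsto_eventually)
qed

lemma rs_sum_union:
  assumes p1: "p1 tagged_division_of {a..b}" and p2: "p2 tagged_division_of {b..c}"
  shows "rs_sum H g (p1 \<union> p2) = rs_sum H g p1 + rs_sum H g p2"
proof -
  have "(\<Sum>(t,K)\<in>p1 \<inter> p2. H t * (g (Sup K) - g (Inf K))) = 0"
  proof (rule sum.neutral, clarify)
    fix t K assume "(t,K) \<in> p1" "(t,K) \<in> p2"
    then have "K \<subseteq> {a..b}" "K \<subseteq> {b..c}" "t \<in> K" using p1 p2 by auto
    then have "K = {b}" by (auto simp: subset_iff) (metis atLeastAtMost_iff order_antisym)+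
    then show "H t * (g (Sup K) - g (Inf K)) = 0" by simp
  qed
  then show ?thesis
    using sum.union_inter[of p1 p2 "\<lambda>(t,K). H t * (g (Sup K) - g (Inf K))"] p1 p2
    unfolding rs_sum_def by auto
qed

text \<open>Additivity over adjacent intervals: fine divisions of \<open>[a,b]\<close> and \<open>[b,c]\<close> combine to a
  fine division of \<open>[a,c]\<close>.\<close>

lemma hs_int_additive:
  assumes g: "is_BV g" and H: "continuous_on {a..c} H" and ab: "a \<le> b" "b \<le> c"
  shows "hs_int H g a c = hs_int H g a b + hs_int H g b c"
proof -
  let ?I = "hs_int H g a c" and ?I1 = "hs_int H g a b" and ?I2 = "hs_int H g b c"
  have lim: "(rs_sum H g \<longlongrightarrow> ?I) (fine_divisions a c)" "(rs_sum H g \<longlongrightarrow> ?I1) (fine_divisions a b)"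
    "(rs_sum H g \<longlongrightarrow> ?I2) (fine_divisions b c)"
    using ab by (auto intro!: rs_integral_hs_int[OF g] continuous_on_subset[OF H])
  have "\<bar>?I - (?I1 + ?I2)\<bar> \<le> 0 + e" if "e > 0" for e
  proof -
    have "e/3 > 0" using that by simp
    from tendstoD[OF lim(1) this] tendstoD[OF lim(2) this] tendstoD[OF lim(3) this]
    obtain d1 d2 d3 where d: "d1 > 0" "d2 > 0" "d3 > 0"
      and d1: "\<And>p. p tagged_division_of {a..c} \<Longrightarrow> (\<lambda>x. ball x d1) fine p \<Longrightarrow> \<bar>rs_sum H g p - ?I\<bar> < e/3"
      and d2: "\<And>p. p tagged_division_of {a..b} \<Longrightarrow> (\<lambda>x. ball x d2) fine p \<Longrightarrow> \<bar>rs_sum H g p - ?I1\<bar> < e/3"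
      and d3: "\<And>p. p tagged_division_of {b..c} \<Longrightarrow> (\<lambda>x. ball x d3) fine p \<Longrightarrow> \<bar>rs_sum H g p - ?I2\<bar> < e/3"
      unfolding eventually_fine_divisions dist_real_def by metis
    define d where "d = min d1 (min d2 d3)"
    have "d > 0" "d \<le> d1" "d \<le> d2" "d \<le> d3" using d unfolding d_def by auto
    obtain p1 where p1: "p1 tagged_division_of {a..b}" "(\<lambda>x. ball x d) fine p1"
      using fine_division_exists_real[OF gauge_ball[OF \<open>d > 0\<close>]] by metis
    obtain p2 where p2: "p2 tagged_division_of {b..c}" "(\<lambda>x. ball x d) fine p2"
      using fine_division_exists_real[OF gauge_ball[OF \<open>d > 0\<close>]] by metis
    have "(p1 \<union> p2) tagged_division_of ({a..b} \<union> {b..c})"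
      by (rule tagged_division_Un[OF p1(1) p2(1)]) auto
    moreover have "{a..b} \<union> {b..c} = {a..c}" using ab by auto
    ultimately have "(p1 \<union> p2) tagged_division_of {a..c}" by simp
    moreover have "(\<lambda>x. ball x d1) fine (p1 \<union> p2)"
      using fine_mono[OF \<open>d \<le> d1\<close> fine_Un[OF p1(2) p2(2)]] .
    ultimately have "\<bar>rs_sum H g (p1 \<union> p2) - ?I\<bar> < e/3" by (rule d1)
    moreover have "\<bar>rs_sum H g p1 - ?I1\<bar> < e/3" "\<bar>rs_sum H g p2 - ?I2\<bar> < e/3"
      using d2[OF p1(1)] d3[OF p2(1)] fine_mono p1(2) p2(2) \<open>d \<le> d2\<close> \<open>d \<le> d3\<close> by blast+
    ultimately show ?thesis unfolding rs_sum_union[OF p1(1) p2(1)] by linarith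
  qed
  then have "\<bar>?I - (?I1 + ?I2)\<bar> \<le> 0" by (rule field_le_epsilon)
  then show ?thesis by linarith
qed

lemma hs_int_bound:
  assumes g: "is_BV g" and H: "continuous_on {a..b} H" and ab: "a \<le> b"
    and M: "\<And>y. y \<in> {a..b} \<Longrightarrow> \<bar>H y\<bar> \<le> M" and W: "\<And>s. s \<in> var_sums_on g {a..b} \<Longrightarrow> s \<le> W"
  shows "\<bar>hs_int H g a b\<bar> \<le> M * W"
proof (rule tendsto_upperbound[OF tendsto_rabs[OF rs_integral_hs_int[OF g H]] _ fine_divisions_ne_bot])
  show "eventually (\<lambda>p. \<bar>rs_sum H g p\<bar> \<le> M * W) (fine_divisions a b)"
    unfolding eventually_fine_divisions using rs_sum_bound[OF ab _ M W] by (auto intro!: exI[of _ 1])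
qed

lemma tagged_division_image:
  fixes m :: "real \<Rightarrow> real"
  assumes p: "p tagged_division_of S" and inj: "inj m" and cont: "\<And>x. continuous (at x) m"
    and iv: "\<And>u v. \<exists>w z. m ` {u..v} = {w..z}"
  shows "(\<lambda>(x,K). (m x, m ` K)) ` p tagged_division_of (m ` S)"
proof (rule tagged_division_ofI)
  show "finite ((\<lambda>(x,K). (m x, m ` K)) ` p)" using p by auto
next
  fix x K assume "(x,K) \<in> (\<lambda>(x,K). (m x, m ` K)) ` p"
  then obtain y L where yL: "(y,L) \<in> p" "x = m y" "K = m ` L" by auto
  show "x \<in> K" "K \<subseteq> m ` S" using yL p by auto
  obtain u v where "L = cbox u v" using p yL by blast
  then show "\<exists>a b. K = cbox a b" using iv[of u v] yL by auto
next
  fix x1 K1 x2 K2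
  assume a1: "(x1,K1) \<in> (\<lambda>(x,K). (m x, m ` K)) ` p" and a2: "(x2,K2) \<in> (\<lambda>(x,K). (m x, m ` K)) ` p"
    and ne: "(x1,K1) \<noteq> (x2,K2)"
  obtain y1 L1 where y1: "(y1,L1) \<in> p" "x1 = m y1" "K1 = m ` L1" using a1 by auto
  obtain y2 L2 where y2: "(y2,L2) \<in> p" "x2 = m y2" "K2 = m ` L2" using a2 by auto
  have "(y1,L1) \<noteq> (y2,L2)" using ne y1 y2 by auto
  then have "interior L1 \<inter> interior L2 = {}" using p y1 y2 by (meson tagged_division_ofD(5))
  then have "m ` interior L1 \<inter> m ` interior L2 = {}" using inj by (simp add: image_Int[symmetric])
  moreover have "interior K1 \<subseteq> m ` interior L1" "interior K2 \<subseteq> m ` interior L2"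
    using interior_image_subset[OF inj cont] y1 y2 by auto
  ultimately show "interior K1 \<inter> interior K2 = {}" by blast
next
  have "{K. \<exists>x. (x,K) \<in> (\<lambda>(x,K). (m x, m ` K)) ` p} = (\<lambda>K. m ` K) ` {K. \<exists>x. (x,K) \<in> p}"
    by force
  moreover have "\<Union>{K. \<exists>x. (x,K) \<in> p} = S" using p by auto
  ultimately show "\<Union>{K. \<exists>x. (x,K) \<in> (\<lambda>(x,K). (m x, m ` K)) ` p} = m ` S" by (metis image_Union)
qed

lemma filterlim_image_fine_divisions:
  fixes m :: "real \<Rightarrow> real"
  assumes iso: "\<And>x y. \<bar>m x - m y\<bar> = \<bar>x - y\<bar>" and iv: "\<And>u v. \<exists>w z. m ` {u..v} = {w..z}"
    and S: "m ` {a'..b'} = {a..b}"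
  shows "filterlim (\<lambda>p. (\<lambda>(x,K). (m x, m ` K)) ` p) (fine_divisions a b) (fine_divisions a' b')"
  unfolding filterlim_def le_filter_def eventually_filtermap
proof (intro allI impI)
  fix P assume "eventually P (fine_divisions a b)"
  then obtain d where "d > 0"
    and d: "\<And>q. q tagged_division_of {a..b} \<Longrightarrow> (\<lambda>x. ball x d) fine q \<Longrightarrow> P q"
    unfolding eventually_fine_divisions by blast
  have inj: "inj m"
  proof (rule injI)
    fix x y assume "m x = m y"
    then show "x = y" using iso[of x y] by simp
  qed
  have cont: "continuous (at x) m" for x
    unfolding continuous_at_eps_delta dist_real_def iso by blast
  have "P ((\<lambda>(x,K). (m x, m ` K)) ` p)"
    if p: "p tagged_division_of {a'..b'}" "(\<lambda>x. ball x d) fine p" for p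
  proof (rule d)
    show "(\<lambda>(x,K). (m x, m ` K)) ` p tagged_division_of {a..b}"
      using tagged_division_image[OF p(1) inj cont iv] S by simp
    show "(\<lambda>x. ball x d) fine (\<lambda>(x,K). (m x, m ` K)) ` p"
      unfolding fine_def
    proof clarify
      fix x K y assume "(x,K) \<in> p" "y \<in> K"
      then have "y \<in> ball x d" using fineD[OF p(2)] by blast
      then show "m y \<in> ball (m x) d" using iso by (simp add: dist_real_def)
    qed
  qed
  then show "eventually (\<lambda>p. P ((\<lambda>(x,K). (m x, m ` K)) ` p)) (fine_divisions a' b')"
    unfolding eventually_fine_divisions using \<open>d > 0\<close> by blast
qed

lemma rs_sum_image:
  fixes m :: "real \<Rightarrow> real"
  assumes "inj m"
  shows "rs_sum H g ((\<lambda>(x,K). (m x, m ` K)) ` p) = (\<Sum>(x,K)\<in>p. H (m x) * (g (Sup (m ` K)) - g (Inf (m ` K))))"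
proof -
  have "inj_on (\<lambda>(x,K). (m x, m ` K)) p"
    using assms unfolding inj_on_def inj_def by (auto simp: inj_image_eq_iff[OF assms])
  then show ?thesis unfolding rs_sum_def by (subst sum.reindex) (simp_all add: case_prod_unfold)
qed

lemma rs_integral_reflect:
  assumes I: "(rs_sum H g \<longlongrightarrow> I) (fine_divisions a b)"
  shows "(rs_sum (\<lambda>y. H (c - y)) (\<lambda>y. g (c - y)) \<longlongrightarrow> - I) (fine_divisions (c - b) (c - a))"
proof -
  let ?m = "\<lambda>y::real. c - y"
  let ?img = "\<lambda>p. (\<lambda>(x,K). (?m x, ?m ` K)) ` p"
  have inj: "inj ?m" by (auto intro: injI)
  have "filterlim ?img (fine_divisions a b) (fine_divisions (c - b) (c - a))"
    by (rule filterlim_image_fine_divisions) (auto simp: abs_minus_commute image_diff_atLeastAtMost)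
  from filterlim_compose[OF I this]
  have "((\<lambda>p. rs_sum H g (?img p)) \<longlongrightarrow> I) (fine_divisions (c - b) (c - a))" .
  moreover have "rs_sum H g (?img p) = - rs_sum (\<lambda>y. H (c - y)) (\<lambda>y. g (c - y)) p"
    if p: "p tagged_division_of {c - b..c - a}" for p
  proof -
    have "(\<lambda>(x,K). H (?m x) * (g (Sup (?m ` K)) - g (Inf (?m ` K)))) z
        = - (\<lambda>(t,K). H (c - t) * (g (c - Sup K) - g (c - Inf K))) z" if z: "z \<in> p" for z
    proof -
      obtain u v where "snd z = {u..v}" "u \<le> v"
        using tagged_division_interval[OF p, of "fst z" "snd z"] z by auto
      then show ?thesis by (simp add: case_prod_unfold image_diff_atLeastAtMost algebra_simps)
    qed
    then have "(\<Sum>(x,K)\<in>p. H (?m x) * (g (Sup (?m ` K)) - g (Inf (?m ` K))))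
        = - rs_sum (\<lambda>y. H (c - y)) (\<lambda>y. g (c - y)) p"
      unfolding rs_sum_def sum_negf[symmetric] by (rule sum.cong[OF refl])
    with rs_sum_image[OF inj] show ?thesis by simp
  qed
  then have "eventually (\<lambda>p. rs_sum H g (?img p) = - rs_sum (\<lambda>y. H (c - y)) (\<lambda>y. g (c - y)) p)
      (fine_divisions (c - b) (c - a))"
    unfolding eventually_fine_divisions by (auto intro!: exI[of _ 1])
  ultimately have "((\<lambda>p. - rs_sum (\<lambda>y. H (c - y)) (\<lambda>y. g (c - y)) p) \<longlongrightarrow> I) (fine_divisions (c - b) (c - a))"
    by (rule tendsto_cong[THEN iffD1, rotated])
  from tendsto_minus[OF this] show ?thesis by simp
qed

lemma rs_integral_translate:
  assumes I: "(rs_sum H g \<longlongrightarrow> I) (fine_divisions a b)"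
  shows "(rs_sum (\<lambda>y. H (y + c)) (\<lambda>y. g (y + c)) \<longlongrightarrow> I) (fine_divisions (a - c) (b - c))"
proof -
  let ?m = "\<lambda>y::real. y + c"
  let ?img = "\<lambda>p. (\<lambda>(x,K). (?m x, ?m ` K)) ` p"
  have inj: "inj ?m" by (auto intro: injI)
  have "filterlim ?img (fine_divisions a b) (fine_divisions (a - c) (b - c))"
    by (rule filterlim_image_fine_divisions) (auto simp: image_add_atLeastAtMost')
  from filterlim_compose[OF I this]
  have "((\<lambda>p. rs_sum H g (?img p)) \<longlongrightarrow> I) (fine_divisions (a - c) (b - c))" .
  moreover have "rs_sum H g (?img p) = rs_sum (\<lambda>y. H (y + c)) (\<lambda>y. g (y + c)) p"
    if p: "p tagged_division_of {a - c..b - c}" for p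
  proof -
    have "(\<lambda>(x,K). H (?m x) * (g (Sup (?m ` K)) - g (Inf (?m ` K)))) z
        = (\<lambda>(t,K). H (t + c) * (g (Sup K + c) - g (Inf K + c))) z" if z: "z \<in> p" for z
    proof -
      obtain u v where "snd z = {u..v}" "u \<le> v"
        using tagged_division_interval[OF p, of "fst z" "snd z"] z by auto
      then show ?thesis by (simp add: case_prod_unfold image_add_atLeastAtMost')
    qed
    then have "(\<Sum>(x,K)\<in>p. H (?m x) * (g (Sup (?m ` K)) - g (Inf (?m ` K))))
        = rs_sum (\<lambda>y. H (y + c)) (\<lambda>y. g (y + c)) p"
      unfolding rs_sum_def by (rule sum.cong[OF refl])
    with rs_sum_image[OF inj] show ?thesis by simp
  qed
  then have "eventually (\<lambda>p. rs_sum H g (?img p) = rs_sum (\<lambda>y. H (y + c)) (\<lambda>y. g (y + c)) p)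
      (fine_divisions (a - c) (b - c))"
    unfolding eventually_fine_divisions by (auto intro!: exI[of _ 1])
  ultimately show ?thesis by (rule tendsto_cong[THEN iffD1, rotated])
qed

section \<open>The Henstock--Stieltjes integral over the real line\<close>

lemma at_bot_at_top_ne_bot: "(at_bot \<times>\<^sub>F at_top :: (real \<times> real) filter) \<noteq> bot"
  by (simp add: prod_filter_eq_bot)

lemma eventually_around: "eventually (\<lambda>(a,b). a \<le> y \<and> y \<le> b) (at_bot \<times>\<^sub>F at_top)" for y :: real
  unfolding eventually_prod_filter
  by (intro exI[of _ "\<lambda>a. a \<le> y"] exI[of _ "\<lambda>b. y \<le> b"]) auto

lemma filterlim_ends_reflect:
  "filterlim (\<lambda>(a,b). (c - b, c - a)) (at_bot \<times>\<^sub>F at_top) (at_bot \<times>\<^sub>F (at_top :: real filter))"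
  unfolding case_prod_unfold
  by (intro filterlim_Pair filterlim_compose[OF filterlim_real_affine(3) filterlim_snd]
      filterlim_compose[OF filterlim_real_affine(4) filterlim_fst])

lemma filterlim_ends_shift:
  "filterlim (\<lambda>(a,b). (a + c, b + c)) (at_bot \<times>\<^sub>F at_top) (at_bot \<times>\<^sub>F (at_top :: real filter))"
  unfolding case_prod_unfold
  by (intro filterlim_Pair filterlim_compose[OF filterlim_real_affine(2) filterlim_fst]
      filterlim_compose[OF filterlim_real_affine(1) filterlim_snd])

lemma hs_integral_R_intro:
  assumes "\<And>a b. a \<le> b \<Longrightarrow> \<exists>I. hs_has_integral H g a b I"
    and lim: "((\<lambda>(a,b). hs_int H g a b) \<longlongrightarrow> L) (at_bot \<times>\<^sub>F at_top)"
  shows "hs_integrable_R H g" "hs_integral_R H g = L"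
  using assms tendsto_Lim[OF at_bot_at_top_ne_bot lim]
  unfolding hs_integrable_R_def hs_integral_R_def by blast+

lemma hs_int_tails_small:
  assumes g: "is_BV g" and H: "continuous_on UNIV H" and M: "\<And>y. \<bar>H y\<bar> \<le> M"
    and tails: "\<And>s. s \<in> var_sums_on g {B..} \<Longrightarrow> s \<le> \<epsilon>" "\<And>s. s \<in> var_sums_on g {..-B} \<Longrightarrow> s \<le> \<epsilon>"
    and B: "0 \<le> B" and ab: "a \<le> -B" "B \<le> b"
  shows "\<bar>hs_int H g a b - hs_int H g (-B) B\<bar> \<le> 2 * M * \<epsilon>"
proof -
  let ?J = "hs_int H g"
  have cont: "continuous_on {a..b} H" for a b using continuous_on_subset[OF H] by blast
  have "?J a b = ?J a (-B) + ?J (-B) b" "?J (-B) b = ?J (-B) B + ?J B b"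
    using ab B by (auto intro!: hs_int_additive[OF g cont])
  moreover have "\<bar>?J a (-B)\<bar> \<le> M * \<epsilon>"
    using ab M tails(2) var_sums_on_mono[of "{a..-B}" "{..-B}"] by (intro hs_int_bound[OF g cont]) auto
  moreover have "\<bar>?J B b\<bar> \<le> M * \<epsilon>"
    using ab M tails(1) var_sums_on_mono[of "{B..b}" "{B..}"] by (intro hs_int_bound[OF g cont]) auto
  ultimately show ?thesis by linarith
qed

text \<open>Existence for bounded continuous integrands: by the previous lemma the integrals over
  \<open>[a,b]\<close> are Cauchy as \<open>(a,b) \<rightarrow> (-\<infinity>,\<infinity>)\<close>.\<close>

lemma hs_integral_R_exists:
  assumes g: "is_BV g" and H: "continuous_on UNIV H" and M: "\<And>y. \<bar>H y\<bar> \<le> M"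
  shows "hs_integrable_R H g" "((\<lambda>(a,b). hs_int H g a b) \<longlongrightarrow> hs_integral_R H g) (at_bot \<times>\<^sub>F at_top)"
proof -
  let ?J = "hs_int H g"
  have "\<exists>L. ((\<lambda>(a,b). ?J a b) \<longlongrightarrow> L) (at_bot \<times>\<^sub>F at_top)"
  proof (rule filter_Cauchy_convergent[OF at_bot_at_top_ne_bot])
    fix e :: real assume "e > 0"
    have M0: "0 \<le> M" using M[of 0] by linarith
    define \<epsilon> where "\<epsilon> = e / (4 * M + 1)"
    have \<epsilon>: "\<epsilon> > 0" "4 * M * \<epsilon> < e"
      using \<open>e > 0\<close> M0 unfolding \<epsilon>_def by (auto simp: field_simps)
    obtain B0 where B0: "\<And>s. s \<in> var_sums_on g {B0..} \<Longrightarrow> s \<le> \<epsilon>"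
      "\<And>s. s \<in> var_sums_on g {..-B0} \<Longrightarrow> s \<le> \<epsilon>"
      using var_sums_on_tails[OF g \<epsilon>(1)] by blast
    define B where "B = max B0 0"
    have "var_sums_on g {B..} \<subseteq> var_sums_on g {B0..}" "var_sums_on g {..-B} \<subseteq> var_sums_on g {..-B0}"
      unfolding B_def by (auto intro!: var_sums_on_mono)
    then have near: "\<bar>?J a b - ?J (-B) B\<bar> \<le> 2 * M * \<epsilon>" if "a \<le> -B" "B \<le> b" for a b
      using B0 that by (intro hs_int_tails_small[OF g H M]) (auto simp: B_def)
    have "eventually (\<lambda>(a,b). a \<le> -B \<and> B \<le> b) (at_bot \<times>\<^sub>F at_top)"
      unfolding eventually_prod_filter
      by (intro exI[of _ "\<lambda>a. a \<le> -B"] exI[of _ "\<lambda>b. B \<le> b"]) auto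
    moreover have "dist (?J a b) (?J a' b') < e"
      if "a \<le> -B" "B \<le> b" "a' \<le> -B" "B \<le> b'" for a b a' b'
      using near[of a b] near[of a' b'] that \<epsilon>(2) unfolding dist_real_def by linarith
    ultimately show "\<exists>P. eventually P (at_bot \<times>\<^sub>F at_top) \<and>
        (\<forall>x y. P x \<and> P y \<longrightarrow> dist (case x of (a,b) \<Rightarrow> ?J a b) (case y of (a,b) \<Rightarrow> ?J a b) < e)"
      by (intro exI[of _ "\<lambda>(a,b). a \<le> -B \<and> B \<le> b"]) auto
  qed
  then obtain L where L: "((\<lambda>(a,b). ?J a b) \<longlongrightarrow> L) (at_bot \<times>\<^sub>F at_top)" by blast
  have ex: "\<exists>I. hs_has_integral H g a b I" for a b
    using rs_integral_exists[OF g continuous_on_subset[OF H]] rs_integral_hs_has_integral by blast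
  show "hs_integrable_R H g" by (rule hs_integral_R_intro(1)[OF ex L])
  show "((\<lambda>(a,b). ?J a b) \<longlongrightarrow> hs_integral_R H g) (at_bot \<times>\<^sub>F at_top)"
    using L hs_integral_R_intro(2)[OF ex L] by simp
qed

lemma hs_integral_R_estimate:
  assumes g: "is_BV g" and H: "continuous_on UNIV H" and M: "\<And>y. \<bar>H y\<bar> \<le> M"
    and H1: "\<And>y. y \<le> y0 \<Longrightarrow> \<bar>H y - c1\<bar> \<le> M1" and H2: "\<And>y. y0 \<le> y \<Longrightarrow> \<bar>H y - c2\<bar> \<le> M2"
  shows "\<bar>hs_integral_R H g - c1 * (g y0 - lim_bot g) - c2 * (lim_top g - g y0)\<bar>
    \<le> M1 * var_left g y0 + M2 * var_right g y0"
proof -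
  let ?J = "hs_int H g"
  let ?W = "M1 * var_left g y0 + M2 * var_right g y0"
  have cont: "continuous_on {a..b} H" for a b using continuous_on_subset[OF H] by blast
  have piece: "\<bar>?J a b - c * (g b - g a)\<bar> \<le> K * W"
    if ab: "a \<le> b" and HK: "\<And>y. y \<in> {a..b} \<Longrightarrow> \<bar>H y - c\<bar> \<le> K"
      and W: "\<And>s. s \<in> var_sums_on g {a..b} \<Longrightarrow> s \<le> W" for a b c K W
  proof -
    have "?J a b - c * (g b - g a) = hs_int (\<lambda>y. H y - c) g a b"
      using hs_int_diff[OF g cont continuous_on_const] hs_int_const[OF ab] by simp
    also have "\<bar>\<dots>\<bar> \<le> K * W"
      using HK W by (intro hs_int_bound[OF g _ ab]) (auto intro!: continuous_intros cont)
    finally show ?thesis .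
  qed
  have est: "\<bar>?J a b - c1 * (g y0 - g a) - c2 * (g b - g y0)\<bar> \<le> ?W" if ab: "a \<le> y0" "y0 \<le> b" for a b
  proof -
    have "?J a b = ?J a y0 + ?J y0 b" by (rule hs_int_additive[OF g cont ab])
    moreover have "var_sums_on g {a..y0} \<subseteq> var_sums_on g {..y0}"
      "var_sums_on g {y0..b} \<subseteq> var_sums_on g {y0..}" by (auto intro!: var_sums_on_mono)
    then have "\<bar>?J a y0 - c1 * (g y0 - g a)\<bar> \<le> M1 * var_left g y0"
      "\<bar>?J y0 b - c2 * (g b - g y0)\<bar> \<le> M2 * var_right g y0"
      using H1 H2 var_left_upper[OF g] var_right_upper[OF g] by (auto intro!: piece ab)
    ultimately show ?thesis by linarith
  qed
  have "((\<lambda>x. \<bar>?J (fst x) (snd x) - c1 * (g y0 - g (fst x)) - c2 * (g (snd x) - g y0)\<bar>) \<longlongrightarrow>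
      \<bar>hs_integral_R H g - c1 * (g y0 - lim_bot g) - c2 * (lim_top g - g y0)\<bar>) (at_bot \<times>\<^sub>F at_top)"
    using hs_integral_R_exists(2)[OF g H M]
    by (intro tendsto_intros filterlim_compose[OF BV_limits(2)[OF g] filterlim_fst]
        filterlim_compose[OF BV_limits(1)[OF g] filterlim_snd]) (simp add: case_prod_unfold)
  moreover have "eventually (\<lambda>x. \<bar>?J (fst x) (snd x) - c1 * (g y0 - g (fst x)) - c2 * (g (snd x) - g y0)\<bar> \<le> ?W)
      (at_bot \<times>\<^sub>F at_top)"
    using eventually_around[of y0] by eventually_elim (auto intro: est)
  ultimately show ?thesis by (rule tendsto_upperbound[OF _ _ at_bot_at_top_ne_bot])
qed

lemma hs_integral_R_const:
  assumes g: "is_BV g" shows "hs_integral_R (\<lambda>y. c) g = c * (lim_top g - lim_bot g)"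
proof -
  have "\<bar>hs_integral_R (\<lambda>y. c) g - c * (g 0 - lim_bot g) - c * (lim_top g - g 0)\<bar> \<le> 0 * var_left g 0 + 0 * var_right g 0"
    by (rule hs_integral_R_estimate[OF g continuous_on_const, where M = "\<bar>c\<bar>"]) auto
  then show ?thesis by (simp add: algebra_simps)
qed

lemma hs_integral_R_diff:
  assumes g: "is_BV g" and H1: "continuous_on UNIV H1" "\<And>y. \<bar>H1 y\<bar> \<le> M1"
    and H2: "continuous_on UNIV H2" "\<And>y. \<bar>H2 y\<bar> \<le> M2"
  shows "hs_integral_R (\<lambda>y. H1 y - H2 y) g = hs_integral_R H1 g - hs_integral_R H2 g"
proof -
  have H: "continuous_on UNIV (\<lambda>y. H1 y - H2 y)" using H1(1) H2(1) by (intro continuous_intros)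
  have M: "\<bar>H1 y - H2 y\<bar> \<le> M1 + M2" for y using H1(2)[of y] H2(2)[of y] by (simp add: abs_le_iff)
  have "((\<lambda>p. hs_int H1 g (fst p) (snd p) - hs_int H2 g (fst p) (snd p))
      \<longlongrightarrow> hs_integral_R H1 g - hs_integral_R H2 g) (at_bot \<times>\<^sub>F at_top)"
    using tendsto_diff[OF hs_integral_R_exists(2)[OF g H1] hs_integral_R_exists(2)[OF g H2]]
    by (simp add: case_prod_unfold)
  moreover have "eventually (\<lambda>p. hs_int H1 g (fst p) (snd p) - hs_int H2 g (fst p) (snd p)
      = hs_int (\<lambda>y. H1 y - H2 y) g (fst p) (snd p)) (at_bot \<times>\<^sub>F at_top)"
    using eventually_around[of 0]
    by eventually_elim (auto intro!: hs_int_diff[symmetric, OF g] continuous_on_subset[OF H1(1)]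
        continuous_on_subset[OF H2(1)])
  ultimately have "((\<lambda>p. hs_int (\<lambda>y. H1 y - H2 y) g (fst p) (snd p))
      \<longlongrightarrow> hs_integral_R H1 g - hs_integral_R H2 g) (at_bot \<times>\<^sub>F at_top)"
    by (rule Lim_transform_eventually)
  with hs_integral_R_exists(2)[OF g H M] show ?thesis
    using tendsto_unique[OF at_bot_at_top_ne_bot] by (simp add: case_prod_unfold)
qed

lemma hs_integral_R_reflect:
  assumes g: "is_BV g" and H: "continuous_on UNIV H" and M: "\<And>y. \<bar>H y\<bar> \<le> M"
  shows "hs_integrable_R (\<lambda>y. H (c - y)) (\<lambda>y. g (c - y))"
    "hs_integral_R (\<lambda>y. H (c - y)) (\<lambda>y. g (c - y)) = - hs_integral_R H g"
proof -
  have lim: "(rs_sum (\<lambda>y. H (c - y)) (\<lambda>y. g (c - y)) \<longlongrightarrow> - hs_int H g (c - b) (c - a)) (fine_divisions a b)"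
    for a b
    using rs_integral_reflect[OF rs_integral_hs_int[OF g continuous_on_subset[OF H]], of "c - b" "c - a" c]
    by simp
  have ex: "\<exists>I. hs_has_integral (\<lambda>y. H (c - y)) (\<lambda>y. g (c - y)) a b I" for a b
    using rs_integral_hs_has_integral[OF lim] by blast
  have "((\<lambda>(a,b). - hs_int H g (c - b) (c - a)) \<longlongrightarrow> - hs_integral_R H g) (at_bot \<times>\<^sub>F at_top)"
    using tendsto_minus[OF filterlim_compose[OF hs_integral_R_exists(2)[OF g H M] filterlim_ends_reflect]]
    by (simp add: case_prod_unfold)
  then have "((\<lambda>(a,b). hs_int (\<lambda>y. H (c - y)) (\<lambda>y. g (c - y)) a b) \<longlongrightarrow> - hs_integral_R H g) (at_bot \<times>\<^sub>F at_top)"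
    using hs_int_eqI[OF lim] by simp
  from hs_integral_R_intro[OF ex this]
  show "hs_integrable_R (\<lambda>y. H (c - y)) (\<lambda>y. g (c - y))"
    "hs_integral_R (\<lambda>y. H (c - y)) (\<lambda>y. g (c - y)) = - hs_integral_R H g" by blast+
qed

lemma hs_integral_R_translate:
  assumes g: "is_BV g" and H: "continuous_on UNIV H" and M: "\<And>y. \<bar>H y\<bar> \<le> M"
  shows "hs_integral_R (\<lambda>y. H (y + c)) (\<lambda>y. g (y + c)) = hs_integral_R H g"
proof -
  have lim: "(rs_sum (\<lambda>y. H (y + c)) (\<lambda>y. g (y + c)) \<longlongrightarrow> hs_int H g (a + c) (b + c)) (fine_divisions a b)"
    for a b
    using rs_integral_translate[OF rs_integral_hs_int[OF g continuous_on_subset[OF H]], of "a + c" "b + c" c]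
    by simp
  have ex: "\<exists>I. hs_has_integral (\<lambda>y. H (y + c)) (\<lambda>y. g (y + c)) a b I" for a b
    using rs_integral_hs_has_integral[OF lim] by blast
  have "((\<lambda>(a,b). hs_int H g (a + c) (b + c)) \<longlongrightarrow> hs_integral_R H g) (at_bot \<times>\<^sub>F at_top)"
    using filterlim_compose[OF hs_integral_R_exists(2)[OF g H M] filterlim_ends_shift]
    by (simp add: case_prod_unfold)
  then have "((\<lambda>(a,b). hs_int (\<lambda>y. H (y + c)) (\<lambda>y. g (y + c)) a b) \<longlongrightarrow> hs_integral_R H g) (at_bot \<times>\<^sub>F at_top)"
    using hs_int_eqI[OF lim] by simp
  from hs_integral_R_intro(2)[OF ex this] show ?thesis .
qed

section \<open>Primitives of continuous primitive integrable distributions\<close>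

lemma BC_props:
  assumes "BC F"
  shows "continuous_on UNIV F" "(F \<longlongrightarrow> lim_top F) at_top" "(F \<longlongrightarrow> 0) at_bot" "int_R F = lim_top F"
proof -
  show "continuous_on UNIV F" using assms unfolding BC_def C0bar_def by blast
  show "(F \<longlongrightarrow> lim_top F) at_top" using assms lim_top_eq unfolding BC_def C0bar_def by metis
  show bot: "(F \<longlongrightarrow> 0) at_bot" using assms unfolding BC_def by blast
  show "int_R F = lim_top F" unfolding int_R_def lim_bot_eq[OF bot] by simp
qed

text \<open>A primitive is bounded: it is close to its limits outside a compact interval.\<close>

lemma BC_bounded:
  assumes F: "BC F" shows "\<exists>M. \<forall>y. \<bar>F y\<bar> \<le> M"
proof -
  note Fp = BC_props[OF F]
  obtain R1 where R1: "\<And>y. R1 \<le> y \<Longrightarrow> \<bar>F y - lim_top F\<bar> < 1"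
    using tendstoD[OF Fp(2), of 1] unfolding eventually_at_top_linorder dist_real_def by auto
  obtain R2 where R2: "\<And>y. y \<le> R2 \<Longrightarrow> \<bar>F y\<bar> < 1"
    using tendstoD[OF Fp(3), of 1] unfolding eventually_at_bot_linorder dist_real_def by auto
  have "compact (F ` {R2..R1})" by (rule compact_continuous_image[OF continuous_on_subset[OF Fp(1)]]) auto
  then obtain B where B: "\<And>y. y \<in> {R2..R1} \<Longrightarrow> \<bar>F y\<bar> \<le> B"
    using compact_imp_bounded bounded_real by (metis image_eqI)
  have "\<bar>F y\<bar> \<le> max B (\<bar>lim_top F\<bar> + 1)" for y
    using R1[of y] R2[of y] B[of y] by (cases "y \<le> R2"; cases "R1 \<le> y") auto
  then show ?thesis by blast
qed

lemma alex_norm_bounds: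
  assumes F: "BC F"
  shows "\<And>s t. \<bar>F t - F s\<bar> \<le> alex_norm F" "\<And>t. \<bar>lim_top F - F t\<bar> \<le> alex_norm F"
    "\<And>t. \<bar>F t\<bar> \<le> alex_norm F" "\<bar>lim_top F\<bar> \<le> alex_norm F" "0 \<le> alex_norm F"
proof -
  note Fp = BC_props[OF F]
  obtain M where M: "\<And>y. \<bar>F y\<bar> \<le> M" using BC_bounded[OF F] by blast
  have bdd: "bdd_above ((\<lambda>p. \<bar>F (snd p) - F (fst p)\<bar>) ` {p :: real \<times> real. fst p \<le> snd p})"
  proof (rule bdd_aboveI2)
    fix p :: "real \<times> real" show "\<bar>F (snd p) - F (fst p)\<bar> \<le> 2 * M"
      using M[of "snd p"] M[of "fst p"] by (simp add: abs_le_iff)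
  qed
  show incr: "\<bar>F t - F s\<bar> \<le> alex_norm F" for s t
    using cSUP_upper[OF _ bdd, of "(min s t, max s t)"] unfolding alex_norm_def
    by (cases "s \<le> t") (auto simp: abs_minus_commute min_def max_def)
  show top: "\<bar>lim_top F - F t\<bar> \<le> alex_norm F" for t
    using incr by (intro tendsto_upperbound[OF tendsto_intros(12)[OF tendsto_diff[OF Fp(2) tendsto_const]]])
      auto
  show "\<bar>F t\<bar> \<le> alex_norm F" for t
    using incr tendsto_upperbound[OF tendsto_rabs[OF tendsto_diff[OF tendsto_const[of "F t"] Fp(3)]], of "alex_norm F"]
    by simp
  show "\<bar>lim_top F\<bar> \<le> alex_norm F"
    using top tendsto_upperbound[OF tendsto_rabs[OF tendsto_diff[OF tendsto_const[of "lim_top F"] Fp(3)]], of "alex_norm F"]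
    by simp
  then show "0 \<le> alex_norm F" by linarith
qed

text \<open>A primitive is uniformly continuous on the whole line: it is uniformly continuous on a
  compact interval and oscillates little near \<open>\<pm>\<infinity>\<close>.\<close>

lemma BC_uniformly_continuous:
  assumes F: "BC F" and e: "e > 0"
  shows "\<exists>d>0. \<forall>s t. \<bar>s - t\<bar> < d \<longrightarrow> \<bar>F s - F t\<bar> \<le> e"
proof -
  note Fp = BC_props[OF F]
  obtain R1 where R1: "\<And>y. R1 \<le> y \<Longrightarrow> \<bar>F y - lim_top F\<bar> < e/2"
    using tendstoD[OF Fp(2), of "e/2"] e unfolding eventually_at_top_linorder dist_real_def by auto
  obtain R2' where R2': "\<And>y. y \<le> R2' \<Longrightarrow> \<bar>F y\<bar> < e/2"
    using tendstoD[OF Fp(3), of "e/2"] e unfolding eventually_at_bot_linorder dist_real_def by auto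
  define R2 where "R2 = min R2' R1"
  have R2: "\<And>y. y \<le> R2 \<Longrightarrow> \<bar>F y\<bar> < e/2" "R2 \<le> R1" using R2' unfolding R2_def by auto
  have "uniformly_continuous_on {R2 - 1..R1 + 1} F"
    by (rule compact_uniformly_continuous[OF continuous_on_subset[OF Fp(1)]]) auto
  then obtain d0 where "d0 > 0"
    and d0: "\<And>s t. s \<in> {R2 - 1..R1 + 1} \<Longrightarrow> t \<in> {R2 - 1..R1 + 1} \<Longrightarrow> dist s t < d0 \<Longrightarrow> dist (F s) (F t) < e"
    using e unfolding uniformly_continuous_on_def by metis
  have "\<bar>F s - F t\<bar> \<le> e" if st: "\<bar>s - t\<bar> < min d0 1" for s t
  proof (cases "s \<in> {R2 - 1..R1 + 1} \<and> t \<in> {R2 - 1..R1 + 1}")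
    case True
    then show ?thesis using d0[of s t] st by (simp add: dist_real_def)
  next
    case False
    then have "(R1 \<le> s \<and> R1 \<le> t) \<or> (s \<le> R2 \<and> t \<le> R2)" using st R2(2) by (auto simp: abs_less_iff)
    then show ?thesis
    proof
      assume "R1 \<le> s \<and> R1 \<le> t"
      then have "\<bar>F s - lim_top F\<bar> < e/2" "\<bar>F t - lim_top F\<bar> < e/2" using R1 by auto
      then show ?thesis unfolding abs_less_iff abs_le_iff by linarith
    next
      assume "s \<le> R2 \<and> t \<le> R2"
      then have "\<bar>F s\<bar> < e/2" "\<bar>F t\<bar> < e/2" using R2(1) by auto
      then show ?thesis unfolding abs_less_iff abs_le_iff by linarith
    qed
  qed
  moreover have "min d0 1 > 0" using \<open>d0 > 0\<close> by simp
  ultimately show ?thesis by blast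
qed

section \<open>The convolution \<open>f * g\<close>\<close>

lemma reflp_props:
  assumes F: "BC F"
  shows "continuous_on UNIV (reflp F x)" "\<And>y. \<bar>reflp F x y\<bar> \<le> alex_norm F"
    "\<And>y. \<bar>reflp F x y - lim_top F\<bar> \<le> alex_norm F" "lim_top (reflp F x) = lim_top F"
proof -
  show "continuous_on UNIV (reflp F x)" unfolding reflp_def
    by (intro continuous_intros continuous_on_compose2[OF BC_props(1)[OF F]]) auto
  show "\<bar>reflp F x y\<bar> \<le> alex_norm F" "\<bar>reflp F x y - lim_top F\<bar> \<le> alex_norm F" for y
    unfolding reflp_def using alex_norm_bounds(2,3)[OF F] by auto
  have "((\<lambda>y. lim_top F - F (x - y)) \<longlongrightarrow> lim_top F - 0) at_top"
    by (intro tendsto_intros filterlim_compose[OF BC_props(3)[OF F] filterlim_real_affine(3)])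
  then show "lim_top (reflp F x) = lim_top F" unfolding reflp_def by (simp add: lim_top_eq)
qed

lemma conv_fg_eq:
  assumes F: "BC F" shows "conv_fg F g x = lim_top F * lim_top g - hs_integral_R (reflp F x) g"
  unfolding conv_fg_def prod_int_def reflp_props(4)[OF F] ..

lemma conv_fg_estimate:
  assumes F: "BC F" and g: "is_BV g"
    and H1: "\<And>y. y \<le> y0 \<Longrightarrow> \<bar>reflp F x y - c1\<bar> \<le> M1" and H2: "\<And>y. y0 \<le> y \<Longrightarrow> \<bar>reflp F x y - c2\<bar> \<le> M2"
  shows "\<bar>lim_top F * lim_top g - conv_fg F g x - c1 * (g y0 - lim_bot g) - c2 * (lim_top g - g y0)\<bar>
    \<le> M1 * var_left g y0 + M2 * var_right g y0"
  using hs_integral_R_estimate[OF g reflp_props(1,2)[OF F] H1 H2] unfolding conv_fg_eq[OF F] by simp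

lemma conv_fg_near_value:
  assumes F: "BC F" and g: "is_BV g"
  shows "\<bar>conv_fg F g x - lim_top F * g y0\<bar> \<le> alex_norm F * Var g"
proof -
  let ?A = "alex_norm F"
  have "\<bar>lim_top F * lim_top g - conv_fg F g x - 0 * (g y0 - lim_bot g) - lim_top F * (lim_top g - g y0)\<bar>
      \<le> ?A * var_left g y0 + ?A * var_right g y0"
    using reflp_props(2,3)[OF F] by (intro conv_fg_estimate[OF F g]) auto
  also have "\<dots> \<le> ?A * Var g"
    using var_left_right_le_Var[OF g, of y0] alex_norm_bounds(5)[OF F]
    by (simp add: distrib_left[symmetric] mult_left_mono)
  finally show ?thesis by (simp add: algebra_simps abs_minus_commute)
qed

lemma conv_fg_continuous:
  assumes F: "BC F" and g: "is_BV g"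
  shows "continuous_on UNIV (conv_fg F g)"
  unfolding continuous_on_iff
proof (intro ballI allI impI)
  fix x e :: real assume "e > 0"
  define \<epsilon> where "\<epsilon> = e / (Var g + 1)"
  have V0: "0 \<le> Var g" by (rule Var_nonneg[OF g])
  have \<epsilon>: "\<epsilon> > 0" "\<epsilon> * Var g < e" using \<open>e > 0\<close> V0 unfolding \<epsilon>_def by (auto simp: field_simps)
  obtain d where "d > 0" and d: "\<And>s t. \<bar>s - t\<bar> < d \<Longrightarrow> \<bar>F s - F t\<bar> \<le> \<epsilon>"
    using BC_uniformly_continuous[OF F \<epsilon>(1)] by blast
  have "dist (conv_fg F g x') (conv_fg F g x) < e" if "dist x' x < d" for x'
  proof -
    text \<open>\<open>f * g(x) - f * g(x')\<close> is the integral of \<open>F(x' - \<cdot>) - F(x - \<cdot>)\<close>, which is uniformly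
      at most \<open>\<epsilon>\<close>.\<close>
    let ?D = "\<lambda>y. reflp F x y - reflp F x' y"
    have Dc: "continuous_on UNIV ?D" using reflp_props(1)[OF F] by (intro continuous_intros)
    have DM: "\<bar>?D y\<bar> \<le> alex_norm F + alex_norm F" for y
      using reflp_props(2)[OF F, of x y] reflp_props(2)[OF F, of x' y] by (simp add: abs_le_iff)
    have D\<epsilon>: "\<bar>?D y - 0\<bar> \<le> \<epsilon>" for y
      using d[of "x' - y" "x - y"] that unfolding reflp_def by (simp add: dist_real_def abs_minus_commute)
    have "\<bar>hs_integral_R ?D g - 0 * (g 0 - lim_bot g) - 0 * (lim_top g - g 0)\<bar>
        \<le> \<epsilon> * var_left g 0 + \<epsilon> * var_right g 0"
      by (rule hs_integral_R_estimate[OF g Dc DM D\<epsilon> D\<epsilon>])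
    also have "\<dots> \<le> \<epsilon> * Var g"
      using var_left_right_le_Var[OF g, of 0] \<epsilon>(1) by (simp add: distrib_left[symmetric])
    finally have "\<bar>hs_integral_R ?D g\<bar> \<le> \<epsilon> * Var g" by simp
    moreover have "hs_integral_R ?D g = hs_integral_R (reflp F x) g - hs_integral_R (reflp F x') g"
      by (rule hs_integral_R_diff[OF g reflp_props(1,2)[OF F] reflp_props(1,2)[OF F]])
    ultimately show ?thesis
      using \<epsilon>(2) unfolding dist_real_def conv_fg_eq[OF F] by (simp add: abs_minus_commute)
  qed
  then show "\<exists>d>0. \<forall>x'\<in>UNIV. dist x' x < d \<longrightarrow> dist (conv_fg F g x') (conv_fg F g x) < e"
    using \<open>d > 0\<close> by blast
qed

text \<open>At \<open>+\<infinity>\<close>: for large \<open>x\<close> the primitive of \<open>f(x - \<cdot>)\<close> is small left of a point \<open>y0\<close> beyond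
  which \<open>g\<close> has little variation.\<close>

lemma conv_fg_at_top:
  assumes F: "BC F" and g: "is_BV g"
  shows "(conv_fg F g \<longlongrightarrow> lim_top g * int_R F) at_top"
proof (rule tendstoI)
  fix e :: real assume "e > 0"
  let ?A = "alex_norm F"
  have A0: "0 \<le> ?A" using alex_norm_bounds(5)[OF F] .
  have V0: "0 \<le> Var g" by (rule Var_nonneg[OF g])
  define \<epsilon> where "\<epsilon> = e / (2 * (Var g + 1))"
  have \<epsilon>: "\<epsilon> > 0" "\<epsilon> * Var g < e/2" using \<open>e > 0\<close> V0 unfolding \<epsilon>_def by (auto simp: field_simps)
  have "e / (2 * (?A + 1)) > 0" using \<open>e > 0\<close> A0 by simp
  then obtain B where B: "var_right g B \<le> e / (2 * (?A + 1))"
    using var_left_right_tails[OF g] by (metis order_refl)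
  have AVR: "?A * var_right g B < e/2"
  proof -
    have "?A * var_right g B \<le> ?A * (e / (2 * (?A + 1)))" using B A0 by (intro mult_left_mono)
    also have "\<dots> < e/2" using \<open>e > 0\<close> A0 by (simp add: field_simps)
    finally show ?thesis .
  qed
  obtain R where R: "\<And>t. R \<le> t \<Longrightarrow> \<bar>F t - lim_top F\<bar> < \<epsilon>"
    using tendstoD[OF BC_props(2)[OF F] \<epsilon>(1)] unfolding eventually_at_top_linorder dist_real_def by auto
  have "dist (conv_fg F g x) (lim_top g * int_R F) < e" if x: "B + R \<le> x" for x
  proof -
    have "\<bar>reflp F x y - 0\<bar> \<le> \<epsilon>" if "y \<le> B" for y
      using R[of "x - y"] x that by (simp add: reflp_def abs_minus_commute)
    then have "\<bar>lim_top F * lim_top g - conv_fg F g x - 0 * (g B - lim_bot g) - 0 * (lim_top g - g B)\<bar>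
        \<le> \<epsilon> * var_left g B + ?A * var_right g B"
      using reflp_props(2)[OF F] by (intro conv_fg_estimate[OF F g]) auto
    moreover have "\<epsilon> * var_left g B \<le> \<epsilon> * Var g"
      using var_left_right_le_Var[OF g, of B] var_right_nonneg[OF g, of B] \<epsilon>(1) by (intro mult_left_mono) auto
    ultimately show ?thesis
      using \<epsilon>(2) AVR unfolding dist_real_def BC_props(4)[OF F] by (simp add: algebra_simps abs_minus_commute)
  qed
  then show "eventually (\<lambda>x. dist (conv_fg F g x) (lim_top g * int_R F) < e) at_top"
    unfolding eventually_at_top_linorder by blast
qed

text \<open>At \<open>-\<infinity>\<close>: symmetrically, for small \<open>x\<close> the primitive of \<open>f(x - \<cdot>)\<close> is close to \<open>F(\<infinity>)\<close>
  right of a point \<open>y0\<close> before which \<open>g\<close> has little variation.\<close>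

lemma conv_fg_at_bot:
  assumes F: "BC F" and g: "is_BV g"
  shows "(conv_fg F g \<longlongrightarrow> lim_bot g * int_R F) at_bot"
proof (rule tendstoI)
  fix e :: real assume "e > 0"
  let ?A = "alex_norm F"
  have A0: "0 \<le> ?A" using alex_norm_bounds(5)[OF F] .
  have V0: "0 \<le> Var g" by (rule Var_nonneg[OF g])
  define \<epsilon> where "\<epsilon> = e / (2 * (Var g + 1))"
  have \<epsilon>: "\<epsilon> > 0" "\<epsilon> * Var g < e/2" using \<open>e > 0\<close> V0 unfolding \<epsilon>_def by (auto simp: field_simps)
  have "e / (2 * (?A + 1)) > 0" using \<open>e > 0\<close> A0 by simp
  then obtain B where B: "var_left g (-B) \<le> e / (2 * (?A + 1))"
    using var_left_right_tails[OF g] by (metis order_refl)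
  have AVL: "?A * var_left g (-B) < e/2"
  proof -
    have "?A * var_left g (-B) \<le> ?A * (e / (2 * (?A + 1)))" using B A0 by (intro mult_left_mono)
    also have "\<dots> < e/2" using \<open>e > 0\<close> A0 by (simp add: field_simps)
    finally show ?thesis .
  qed
  obtain R where R: "\<And>t. t \<le> R \<Longrightarrow> \<bar>F t\<bar> < \<epsilon>"
    using tendstoD[OF BC_props(3)[OF F] \<epsilon>(1)] unfolding eventually_at_bot_linorder dist_real_def by auto
  have "dist (conv_fg F g x) (lim_bot g * int_R F) < e" if x: "x \<le> R - B" for x
  proof -
    have "\<bar>reflp F x y - lim_top F\<bar> \<le> \<epsilon>" if "-B \<le> y" for y
      using R[of "x - y"] x that by (simp add: reflp_def)
    then have "\<bar>lim_top F * lim_top g - conv_fg F g x - lim_top F * (g (-B) - lim_bot g)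
        - lim_top F * (lim_top g - g (-B))\<bar> \<le> ?A * var_left g (-B) + \<epsilon> * var_right g (-B)"
      using reflp_props(3)[OF F] by (intro conv_fg_estimate[OF F g]) auto
    moreover have "\<epsilon> * var_right g (-B) \<le> \<epsilon> * Var g"
      using var_left_right_le_Var[OF g, of "-B"] var_left_nonneg[OF g, of "-B"] \<epsilon>(1)
      by (intro mult_left_mono) auto
    ultimately show ?thesis
      using \<epsilon>(2) AVL unfolding dist_real_def BC_props(4)[OF F] by (simp add: algebra_simps abs_minus_commute)
  qed
  then show "eventually (\<lambda>x. dist (conv_fg F g x) (lim_bot g * int_R F) < e) at_bot"
    unfolding eventually_at_bot_linorder by blast
qed

text \<open>Commutativity: substituting \<open>y \<mapsto> x - y\<close> turns \<open>\<integral> f(y) g(x - y) dy\<close> into an integral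
  against \<open>dg\<close>, which is then compared with the defining formula for \<open>f * g(x)\<close>.\<close>

lemma conv_commute:
  assumes F: "BC F" and g: "is_BV g"
  shows "hs_integrable_R F (\<lambda>y. g (x - y))" "conv_fg F g x = conv_gf F g x"
proof -
  let ?G = "\<lambda>y. F (x - y)" and ?L = "lim_top F"
  have Gc: "continuous_on UNIV ?G"
    by (intro continuous_on_compose2[OF BC_props(1)[OF F]] continuous_intros) auto
  have GM: "\<bar>?G y\<bar> \<le> alex_norm F" for y using alex_norm_bounds(3)[OF F] .
  have FG: "(\<lambda>y. ?G (x - y)) = F" by simp
  show "hs_integrable_R F (\<lambda>y. g (x - y))"
    using hs_integral_R_reflect(1)[OF g Gc GM, of x] unfolding FG .
  have "hs_integral_R F (\<lambda>y. g (x - y)) = - hs_integral_R ?G g"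
    using hs_integral_R_reflect(2)[OF g Gc GM, of x] unfolding FG .
  moreover have "lim_top (\<lambda>y. g (x - y)) = lim_bot g"
    by (rule lim_top_eq[OF filterlim_compose[OF BV_limits(2)[OF g] filterlim_real_affine(3)]])
  ultimately have gf: "conv_gf F g x = ?L * lim_bot g + hs_integral_R ?G g"
    unfolding conv_gf_def prod_int_def by simp
  have "reflp F x = (\<lambda>y. ?L - ?G y)" unfolding reflp_def ..
  then have "hs_integral_R (reflp F x) g = hs_integral_R (\<lambda>y. ?L) g - hs_integral_R ?G g"
    using hs_integral_R_diff[OF g continuous_on_const _ Gc GM, of ?L "\<bar>?L\<bar>"] by simp
  then have "conv_fg F g x = ?L * lim_bot g + hs_integral_R ?G g"
    unfolding conv_fg_eq[OF F] hs_integral_R_const[OF g] by (simp add: algebra_simps)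
  with gf show "conv_fg F g x = conv_gf F g x" by simp
qed

lemma conv_transl_F:
  assumes F: "BC F" shows "conv_fg (transl z F) g x = conv_fg F g (x - z)"
proof -
  have "lim_top (transl z F) = lim_top F"
    unfolding transl_def using filterlim_compose[OF BC_props(2)[OF F] filterlim_real_affine(1), of "-z"]
    by (simp add: lim_top_eq)
  then have "reflp (transl z F) x = reflp F (x - z)"
    unfolding reflp_def by (simp add: transl_def algebra_simps)
  then show ?thesis unfolding conv_fg_def by simp
qed

lemma conv_transl_g:
  assumes F: "BC F" and g: "is_BV g" shows "conv_fg F (transl z g) x = conv_fg F g (x - z)"
proof -
  let ?H = "reflp F (x - z)"
  have "(\<lambda>y. ?H (y + - z)) = reflp F x" "(\<lambda>y. g (y + - z)) = transl z g"
    unfolding reflp_def transl_def by (simp_all add: algebra_simps)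
  then have "hs_integral_R (reflp F x) (transl z g) = hs_integral_R ?H g"
    using hs_integral_R_translate[OF g reflp_props(1,2)[OF F], of "x - z" "- z"] by simp
  moreover have "lim_top (transl z g) = lim_top g"
    unfolding transl_def using filterlim_compose[OF BV_limits(1)[OF g] filterlim_real_affine(1), of "-z"]
    by (simp add: lim_top_eq)
  ultimately show ?thesis unfolding conv_fg_def prod_int_def reflp_props(4)[OF F] by simp
qed

text \<open>The uniform bound \<open>\<parallel>f * g\<parallel>\<^sub>\<infinity> \<le> |\<integral>f| inf|g| + \<parallel>f\<parallel> Vg \<le> \<parallel>f\<parallel> \<parallel>g\<parallel>\<^sub>B\<^sub>V\<close>: the first
  inequality is \<open>conv_fg_near_value\<close> optimised over \<open>y0\<close>, the second uses \<open>inf|g| \<le> |g(-\<infinity>)|\<close>.\<close>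

lemma conv_sup_bound:
  assumes F: "BC F" and g: "is_BV g"
  shows "bdd_above (range (\<lambda>x. \<bar>conv_fg F g x\<bar>))"
    "(SUP x. \<bar>conv_fg F g x\<bar>) \<le> \<bar>int_R F\<bar> * (INF y. \<bar>g y\<bar>) + alex_norm F * Var g"
    "\<bar>int_R F\<bar> * (INF y. \<bar>g y\<bar>) + alex_norm F * Var g \<le> alex_norm F * BV_norm g"
proof -
  let ?L = "lim_top F" and ?A = "alex_norm F" and ?I = "INF y. \<bar>g y\<bar>"
  have pt: "\<bar>conv_fg F g x\<bar> \<le> \<bar>?L\<bar> * \<bar>g y\<bar> + ?A * Var g" for x y
    using conv_fg_near_value[OF F g, of x y] abs_triangle_ineq2[of "conv_fg F g x" "?L * g y"]
    by (simp add: abs_mult)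
  show "bdd_above (range (\<lambda>x. \<bar>conv_fg F g x\<bar>))" using pt[of _ 0] by (intro bdd_aboveI2) blast
  have "\<bar>conv_fg F g x\<bar> \<le> \<bar>?L\<bar> * ?I + ?A * Var g" for x
  proof (cases "?L = 0")
    case True then show ?thesis using pt[of x 0] by simp
  next
    case False
    have "(\<bar>conv_fg F g x\<bar> - ?A * Var g) / \<bar>?L\<bar> \<le> \<bar>g y\<bar>" for y
      using pt[of x y] False by (simp add: divide_le_eq mult.commute)
    then have "(\<bar>conv_fg F g x\<bar> - ?A * Var g) / \<bar>?L\<bar> \<le> ?I" by (intro cINF_greatest) auto
    then show ?thesis using False by (simp add: divide_le_eq mult.commute)
  qed
  then show "(SUP x. \<bar>conv_fg F g x\<bar>) \<le> \<bar>int_R F\<bar> * ?I + ?A * Var g"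
    unfolding BC_props(4)[OF F] by (intro cSUP_least) auto
  have I0: "0 \<le> ?I" by (rule cINF_greatest) auto
  have "?I \<le> \<bar>lim_bot g\<bar>"
  proof (rule tendsto_lowerbound)
    show "((\<lambda>y. \<bar>g y\<bar>) \<longlongrightarrow> \<bar>lim_bot g\<bar>) at_bot" by (intro tendsto_intros BV_limits(2)[OF g])
    show "eventually (\<lambda>y. ?I \<le> \<bar>g y\<bar>) at_bot"
      by (intro always_eventually allI cINF_lower bdd_belowI2[of _ 0]) auto
  qed simp
  then have "\<bar>?L\<bar> * ?I \<le> ?A * \<bar>lim_bot g\<bar>"
    by (rule mult_mono[OF alex_norm_bounds(4)[OF F] _ alex_norm_bounds(5)[OF F] I0])
  then show "\<bar>int_R F\<bar> * ?I + ?A * Var g \<le> ?A * BV_norm g"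
    unfolding BC_props(4)[OF F] BV_norm_def by (simp add: distrib_left)
qed

theorem theorem2p1:
  fixes F g :: "real \<Rightarrow> real"
  assumes F: "BC F" and g: "is_BV g"
  shows "(\<forall>x. hs_integrable_R (reflp F x) g)
    \<and> (\<forall>x. hs_integrable_R F (\<lambda>y. g (x - y)) \<and> conv_fg F g x = conv_gf F g x)
    \<and> (bdd_above (range (\<lambda>x. \<bar>conv_fg F g x\<bar>))
       \<and> (SUP x. \<bar>conv_fg F g x\<bar>) \<le> \<bar>int_R F\<bar> * (INF y. \<bar>g y\<bar>) + alex_norm F * Var g
       \<and> \<bar>int_R F\<bar> * (INF y. \<bar>g y\<bar>) + alex_norm F * Var g \<le> alex_norm F * BV_norm g)
    \<and> (C0bar (conv_fg F g)
       \<and> (conv_fg F g \<longlongrightarrow> lim_top g * int_R F) at_top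
       \<and> (conv_fg F g \<longlongrightarrow> lim_bot g * int_R F) at_bot)
    \<and> (\<forall>x z. transl z (conv_fg F g) x = conv_fg (transl z F) g x
          \<and> conv_fg (transl z F) g x = conv_fg F (transl z g) x)"
proof -
  have a: "hs_integrable_R (reflp F x) g" for x
    by (rule hs_integral_R_exists(1)[OF g reflp_props(1,2)[OF F]])
  have d: "C0bar (conv_fg F g)"
    unfolding C0bar_def using conv_fg_continuous[OF F g] conv_fg_at_top[OF F g] conv_fg_at_bot[OF F g] by blast
  have f: "transl z (conv_fg F g) x = conv_fg (transl z F) g x"
    "conv_fg (transl z F) g x = conv_fg F (transl z g) x" for x z
    unfolding conv_transl_F[OF F] conv_transl_g[OF F g] by (simp_all add: transl_def)
  show ?thesis
    using a conv_commute[OF F g] conv_sup_bound[OF F g] d conv_fg_at_top[OF F g] conv_fg_at_bot[OF F g] f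
    by blast
qed

end
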